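(* Let $\mathcal{Q}$ be a small involutive quantaloid. The full inclusion of the symmetrically complete symmetric $\mathcal{Q}$-categories into $\mathsf{SymCat}(\mathcal{Q})$ admits a left adjoint. Explicitly, for a symmetric $\mathcal{Q}$-category $\mathbb{A}$ the reflection is $\mathbb{A}_{\mathsf{sc}}$, the full subcategory of the Cauchy completion $\mathbb{A}_{\mathsf{cc}}$ on the symmetric left adjoint presheaves, and the unit at $\mathbb{A}$ is the functor $Y_{\mathbb{A}}\colon\mathbb{A}\to\mathbb{A}_{\mathsf{sc}}$, $x\mapsto\mathbb{A}(-,x)$.
   Context: A quantaloid is a category enriched in $\mathsf{Sup}$; an involution is an identity-on-objects, direction-reversing, monotone map $f\mapsto f^{\mathsf o}$ on morphisms with $(g\circ f)^{\mathsf o}=f^{\mathsf o}\circ g^{\mathsf o}$, $f^{\mathsf{oo}}=f$. A $\mathcal{Q}$-category $\mathbb{A}$: objects with types $tx\in\mathcal{Q}_0$, homs $\mathbb{A}(y,x)\colon tx\to ty$ with $\mathbb{A}(z,y)\circ\mathbb{A}(y,x)\le\mathbb{A}(z,x)$, $1_{tx}\le\mathbb{A}(x,x)$; symmetric if $\mathbb{A}(x,y)=\mathbb{A}(y,x)^{\mathsf o}$. Functors: type-preserving object maps $F$ with $\mathbb{A}(y,x)\le\mathbb{B}(Fy,Fx)$; $\mathsf{SymCat}(\mathcal{Q})$ is the category of symmetric $\mathcal{Q}$-categories and functors. Distributors $\Phi\colon\mathbb{A}\to\mathbb{B}$: arrows $\Phi(y,x)\colon tx\to ty$ compatible with the homs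 on both sides; composition $(\Psi\otimes\Phi)(z,x)=\bigvee_y\Psi(z,y)\circ\Phi(y,x)$; left adjoint with right adjoint $\Phi^*$ if $\mathbb{A}\le\Phi^*\otimes\Phi$, $\Phi\otimes\Phi^*\le\mathbb{B}$. For symmetric $\mathbb{A},\mathbb{B}$: $\Phi^{\mathsf o}(x,y)=\Phi(y,x)^{\mathsf o}$, and $\Phi$ is a symmetric left adjoint if left adjoint to $\Phi^{\mathsf o}$. $*_X$: one object of type $X$, hom $1_X$; a presheaf is a distributor $*_X\to\mathbb{A}$; it is representable if it equals $\mathbb{A}(-,a)$. $\mathbb{A}_{\mathsf{cc}}$: objects the left adjoint presheaves $\phi\colon *_X\to\mathbb{A}$ (type $X$), hom $\mathbb{A}_{\mathsf{cc}}(\psi,\phi)$ the unique element of $\psi^*\otimes\phi$. A symmetric $\mathbb{A}$ is symmetrically complete if every symmetric left adjoint presheaf on $\mathbb{A}$ is representable (equivalently, for every symmetric $\mathbb{B}$, $F\mapsto\mathbb{A}(-,F-)$ gives an equivalence between functors $\mathbb{B}\to\mathbb{A}$ and symmetric left adjoint distributors $\mathbb{B}\to\mathbb{A}$). *)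

theory Defs
  imports "HOL-Library.FuncSet"
begin

text \<open>A small quantaloid: a set of objects, for objects X Y the set of arrows X -> Y
  (q_hom Q X Y), composition (q_comp Q g f = g o f), identities, the local order
  (each hom a complete lattice, composition preserving arbitrary joins on both sides),
  and an involution.\<close>

record ('o, 'm) quantaloid =
  q_obs  :: "'o set"
  q_hom  :: "'o \<Rightarrow> 'o \<Rightarrow> 'm set"
  q_comp :: "'m \<Rightarrow> 'm \<Rightarrow> 'm"
  q_id   :: "'o \<Rightarrow> 'm"
  q_le   :: "'m \<Rightarrow> 'm \<Rightarrow> bool"
  q_inv  :: "'m \<Rightarrow> 'm"

definition is_lub :: "('o,'m) quantaloid \<Rightarrow> 'o \<Rightarrow> 'o \<Rightarrow> 'm set \<Rightarrow> 'm \<Rightarrow> bool" where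
  "is_lub Q X Y S s \<longleftrightarrow> s \<in> q_hom Q X Y \<and> (\<forall>t\<in>S. q_le Q t s) \<and>
     (\<forall>u\<in>q_hom Q X Y. (\<forall>t\<in>S. q_le Q t u) \<longrightarrow> q_le Q s u)"

definition qSup :: "('o,'m) quantaloid \<Rightarrow> 'o \<Rightarrow> 'o \<Rightarrow> 'm set \<Rightarrow> 'm" where
  "qSup Q X Y S = (THE s. is_lub Q X Y S s)"

definition quantaloid :: "('o,'m) quantaloid \<Rightarrow> bool" where
  "quantaloid Q \<longleftrightarrow>
    (\<forall>X Y f. f \<in> q_hom Q X Y \<longrightarrow> X \<in> q_obs Q \<and> Y \<in> q_obs Q) \<and>
    (\<forall>X Y X' Y' f. f \<in> q_hom Q X Y \<and> f \<in> q_hom Q X' Y' \<longrightarrow> X = X' \<and> Y = Y') \<and>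
    (\<forall>X Y Z f g. f \<in> q_hom Q X Y \<and> g \<in> q_hom Q Y Z \<longrightarrow> q_comp Q g f \<in> q_hom Q X Z) \<and>
    (\<forall>W X Y Z f g h. f \<in> q_hom Q W X \<and> g \<in> q_hom Q X Y \<and> h \<in> q_hom Q Y Z \<longrightarrow>
        q_comp Q h (q_comp Q g f) = q_comp Q (q_comp Q h g) f) \<and>
    (\<forall>X\<in>q_obs Q. q_id Q X \<in> q_hom Q X X) \<and>
    (\<forall>X Y f. f \<in> q_hom Q X Y \<longrightarrow> q_comp Q f (q_id Q X) = f \<and> q_comp Q (q_id Q Y) f = f) \<and>
    (\<forall>X Y. \<forall>f\<in>q_hom Q X Y. q_le Q f f) \<and>
    (\<forall>X Y. \<forall>f\<in>q_hom Q X Y. \<forall>g\<in>q_hom Q X Y. q_le Q f g \<and> q_le Q g f \<longrightarrow> f = g) \<and>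
    (\<forall>X Y. \<forall>f\<in>q_hom Q X Y. \<forall>g\<in>q_hom Q X Y. \<forall>h\<in>q_hom Q X Y.
        q_le Q f g \<and> q_le Q g h \<longrightarrow> q_le Q f h) \<and>
    (\<forall>X\<in>q_obs Q. \<forall>Y\<in>q_obs Q. \<forall>S. S \<subseteq> q_hom Q X Y \<longrightarrow> (\<exists>s. is_lub Q X Y S s)) \<and>
    (\<forall>X Y Z f S. f \<in> q_hom Q X Y \<and> S \<subseteq> q_hom Q Y Z \<longrightarrow>
        q_comp Q (qSup Q Y Z S) f = qSup Q X Z ((\<lambda>g. q_comp Q g f) ` S)) \<and>
    (\<forall>X Y Z g S. g \<in> q_hom Q Y Z \<and> S \<subseteq> q_hom Q X Y \<longrightarrow>
        q_comp Q g (qSup Q X Y S) = qSup Q X Z ((\<lambda>f. q_comp Q g f) ` S))"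

definition involutive_quantaloid :: "('o,'m) quantaloid \<Rightarrow> bool" where
  "involutive_quantaloid Q \<longleftrightarrow> quantaloid Q \<and>
    (\<forall>X Y f. f \<in> q_hom Q X Y \<longrightarrow> q_inv Q f \<in> q_hom Q Y X) \<and>
    (\<forall>X Y. \<forall>f\<in>q_hom Q X Y. \<forall>g\<in>q_hom Q X Y. q_le Q f g \<longrightarrow> q_le Q (q_inv Q f) (q_inv Q g)) \<and>
    (\<forall>X Y Z f g. f \<in> q_hom Q X Y \<and> g \<in> q_hom Q Y Z \<longrightarrow>
        q_inv Q (q_comp Q g f) = q_comp Q (q_inv Q f) (q_inv Q g)) \<and>
    (\<forall>X Y f. f \<in> q_hom Q X Y \<longrightarrow> q_inv Q (q_inv Q f) = f)"

text \<open>c_hom A y x = A(y,x) : tx -> ty.\<close>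

record ('a, 'o, 'm) qcat =
  c_ob  :: "'a set"
  c_ty  :: "'a \<Rightarrow> 'o"
  c_hom :: "'a \<Rightarrow> 'a \<Rightarrow> 'm"

definition qcat :: "('o,'m) quantaloid \<Rightarrow> ('a,'o,'m) qcat \<Rightarrow> bool" where
  "qcat Q A \<longleftrightarrow>
    (\<forall>x\<in>c_ob A. c_ty A x \<in> q_obs Q) \<and>
    (\<forall>x\<in>c_ob A. \<forall>y\<in>c_ob A. c_hom A y x \<in> q_hom Q (c_ty A x) (c_ty A y)) \<and>
    (\<forall>x\<in>c_ob A. \<forall>y\<in>c_ob A. \<forall>z\<in>c_ob A.
        q_le Q (q_comp Q (c_hom A z y) (c_hom A y x)) (c_hom A z x)) \<and>
    (\<forall>x\<in>c_ob A. q_le Q (q_id Q (c_ty A x)) (c_hom A x x))"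

definition symcat :: "('o,'m) quantaloid \<Rightarrow> ('a,'o,'m) qcat \<Rightarrow> bool" where
  "symcat Q A \<longleftrightarrow> qcat Q A \<and>
    (\<forall>x\<in>c_ob A. \<forall>y\<in>c_ob A. c_hom A x y = q_inv Q (c_hom A y x))"

definition qfunctor :: "('o,'m) quantaloid \<Rightarrow> ('a,'o,'m) qcat \<Rightarrow> ('b,'o,'m) qcat \<Rightarrow> ('a \<Rightarrow> 'b) \<Rightarrow> bool" where
  "qfunctor Q A B F \<longleftrightarrow>
    (\<forall>x\<in>c_ob A. F x \<in> c_ob B \<and> c_ty B (F x) = c_ty A x) \<and>
    (\<forall>x\<in>c_ob A. \<forall>y\<in>c_ob A. q_le Q (c_hom A y x) (c_hom B (F y) (F x)))"

text \<open>Isomorphic objects (1 <= B(b,b') and 1 <= B(b',b)); for functors this is the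
  (in the symmetric case, symmetric) local order of SymCat(Q).\<close>

definition iso_obj :: "('o,'m) quantaloid \<Rightarrow> ('b,'o,'m) qcat \<Rightarrow> 'b \<Rightarrow> 'b \<Rightarrow> bool" where
  "iso_obj Q B b b' \<longleftrightarrow> c_ty B b = c_ty B b' \<and>
     q_le Q (q_id Q (c_ty B b)) (c_hom B b b') \<and> q_le Q (q_id Q (c_ty B b')) (c_hom B b' b)"

text \<open>A distributor Phi : A -> B, with Phi y x = Phi(y,x) : tx -> ty.\<close>

definition dist :: "('o,'m) quantaloid \<Rightarrow> ('a,'o,'m) qcat \<Rightarrow> ('b,'o,'m) qcat \<Rightarrow> ('b \<Rightarrow> 'a \<Rightarrow> 'm) \<Rightarrow> bool" where
  "dist Q A B \<Phi> \<longleftrightarrow>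
    (\<forall>y\<in>c_ob B. \<forall>x\<in>c_ob A. \<Phi> y x \<in> q_hom Q (c_ty A x) (c_ty B y)) \<and>
    (\<forall>y'\<in>c_ob B. \<forall>y\<in>c_ob B. \<forall>x\<in>c_ob A. q_le Q (q_comp Q (c_hom B y' y) (\<Phi> y x)) (\<Phi> y' x)) \<and>
    (\<forall>y\<in>c_ob B. \<forall>x\<in>c_ob A. \<forall>x'\<in>c_ob A. q_le Q (q_comp Q (\<Phi> y x) (c_hom A x x')) (\<Phi> y x'))"

definition dcomp :: "('o,'m) quantaloid \<Rightarrow> ('a,'o,'m) qcat \<Rightarrow> ('b,'o,'m) qcat \<Rightarrow> ('c,'o,'m) qcat \<Rightarrow>
    ('c \<Rightarrow> 'b \<Rightarrow> 'm) \<Rightarrow> ('b \<Rightarrow> 'a \<Rightarrow> 'm) \<Rightarrow> ('c \<Rightarrow> 'a \<Rightarrow> 'm)" where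
  "dcomp Q A B C \<Psi> \<Phi> = (\<lambda>z x. qSup Q (c_ty A x) (c_ty C z) ((\<lambda>y. q_comp Q (\<Psi> z y) (\<Phi> y x)) ` c_ob B))"

definition dle :: "('o,'m) quantaloid \<Rightarrow> ('a,'o,'m) qcat \<Rightarrow> ('b,'o,'m) qcat \<Rightarrow>
    ('b \<Rightarrow> 'a \<Rightarrow> 'm) \<Rightarrow> ('b \<Rightarrow> 'a \<Rightarrow> 'm) \<Rightarrow> bool" where
  "dle Q A B \<Phi> \<Psi> \<longleftrightarrow> (\<forall>y\<in>c_ob B. \<forall>x\<in>c_ob A. q_le Q (\<Phi> y x) (\<Psi> y x))"

definition ladj :: "('o,'m) quantaloid \<Rightarrow> ('a,'o,'m) qcat \<Rightarrow> ('b,'o,'m) qcat \<Rightarrow>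
    ('b \<Rightarrow> 'a \<Rightarrow> 'm) \<Rightarrow> ('a \<Rightarrow> 'b \<Rightarrow> 'm) \<Rightarrow> bool" where
  "ladj Q A B \<Phi> \<Psi> \<longleftrightarrow> dist Q A B \<Phi> \<and> dist Q B A \<Psi> \<and>
     dle Q A A (c_hom A) (dcomp Q A B A \<Psi> \<Phi>) \<and> dle Q B B (dcomp Q B A B \<Phi> \<Psi>) (c_hom B)"

text \<open>Distributors are determined by their values on objects; to pick THE right adjoint
  we normalise junk values outside the object sets to undefined.\<close>

definition dext :: "('a,'o,'m) qcat \<Rightarrow> ('b,'o,'m) qcat \<Rightarrow> ('b \<Rightarrow> 'a \<Rightarrow> 'm) \<Rightarrow> bool" where
  "dext A B \<Phi> \<longleftrightarrow> (\<forall>y x. y \<notin> c_ob B \<or> x \<notin> c_ob A \<longrightarrow> \<Phi> y x = undefined)"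

definition radj :: "('o,'m) quantaloid \<Rightarrow> ('a,'o,'m) qcat \<Rightarrow> ('b,'o,'m) qcat \<Rightarrow>
    ('b \<Rightarrow> 'a \<Rightarrow> 'm) \<Rightarrow> ('a \<Rightarrow> 'b \<Rightarrow> 'm)" where
  "radj Q A B \<Phi> = (THE \<Psi>. ladj Q A B \<Phi> \<Psi> \<and> dext B A \<Psi>)"

definition dop :: "('o,'m) quantaloid \<Rightarrow> ('b \<Rightarrow> 'a \<Rightarrow> 'm) \<Rightarrow> ('a \<Rightarrow> 'b \<Rightarrow> 'm)" where
  "dop Q \<Phi> = (\<lambda>x y. q_inv Q (\<Phi> y x))"

definition sladj :: "('o,'m) quantaloid \<Rightarrow> ('a,'o,'m) qcat \<Rightarrow> ('b,'o,'m) qcat \<Rightarrow>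
    ('b \<Rightarrow> 'a \<Rightarrow> 'm) \<Rightarrow> bool" where
  "sladj Q A B \<Phi> \<longleftrightarrow> ladj Q A B \<Phi> (dop Q \<Phi>)"

definition ucat :: "('o,'m) quantaloid \<Rightarrow> 'o \<Rightarrow> (unit,'o,'m) qcat" where
  "ucat Q X = \<lparr>c_ob = {()}, c_ty = (\<lambda>_. X), c_hom = (\<lambda>_ _. q_id Q X)\<rparr>"

text \<open>A presheaf of type X on A is a distributor *_X -> A, i.e. phi :: 'a => unit => 'm.
  It is representable if it equals A(-,a) for some object a (necessarily of type X).\<close>

definition representable :: "('o,'m) quantaloid \<Rightarrow> ('a,'o,'m) qcat \<Rightarrow> 'o \<Rightarrow> ('a \<Rightarrow> unit \<Rightarrow> 'm) \<Rightarrow> bool" where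
  "representable Q A X \<phi> \<longleftrightarrow> (\<exists>a\<in>c_ob A. c_ty A a = X \<and> (\<forall>y\<in>c_ob A. \<phi> y () = c_hom A y a))"

definition symcomplete :: "('o,'m) quantaloid \<Rightarrow> ('a,'o,'m) qcat \<Rightarrow> bool" where
  "symcomplete Q A \<longleftrightarrow> symcat Q A \<and>
     (\<forall>X\<in>q_obs Q. \<forall>\<phi>. sladj Q (ucat Q X) A \<phi> \<longrightarrow> representable Q A X \<phi>)"

text \<open>A_cc: objects the left adjoint presheaves (X, phi) (normalised to be undefined
  outside the objects of A), of type X; hom A_cc(psi,phi) = the unique element of
  psi^* (x) phi, where psi^* is the right adjoint of psi.\<close>

definition cauchy :: "('o,'m) quantaloid \<Rightarrow> ('a,'o,'m) qcat \<Rightarrow> ('o \<times> ('a \<Rightarrow> unit \<Rightarrow> 'm),'o,'m) qcat" where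
  "cauchy Q A = \<lparr>
     c_ob = {(X, \<phi>). X \<in> q_obs Q \<and> \<phi> \<in> extensional (c_ob A) \<and>
                     (\<exists>\<Psi>. ladj Q (ucat Q X) A \<phi> \<Psi>)},
     c_ty = fst,
     c_hom = (\<lambda>(Y, \<psi>) (X, \<phi>).
        dcomp Q (ucat Q X) A (ucat Q Y) (radj Q (ucat Q Y) A \<psi>) \<phi> () ())\<rparr>"

definition symcompletion :: "('o,'m) quantaloid \<Rightarrow> ('a,'o,'m) qcat \<Rightarrow> ('o \<times> ('a \<Rightarrow> unit \<Rightarrow> 'm),'o,'m) qcat" where
  "symcompletion Q A = (cauchy Q A)\<lparr>c_ob :=
     {(X, \<phi>) \<in> c_ob (cauchy Q A). sladj Q (ucat Q X) A \<phi>}\<rparr>"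

definition yoneda :: "('o,'m) quantaloid \<Rightarrow> ('a,'o,'m) qcat \<Rightarrow> 'a \<Rightarrow> 'o \<times> ('a \<Rightarrow> unit \<Rightarrow> 'm)" where
  "yoneda Q A x = (c_ty A x, restrict (\<lambda>y _. c_hom A y x) (c_ob A))"

end

theory Submission
  imports Defs
begin

text \<open>For a symmetric A, a presheaf \<phi> is a symmetric left adjoint exactly when
  1 \<le> \<Or>_a \<phi>(a)^o \<phi>(a) and \<phi>(a') \<phi>(a)^o \<le> A(a', a); its right adjoint is then \<phi>^o, so the homs of
  A_sc are the joins \<Or>_a \<psi>(a)^o \<phi>(a) and all computations reduce to the involution.
  A symmetric left adjoint presheaf \<Phi> on A_sc is represented by its restriction \<phi> along the
  Yoneda embedding: \<Phi>(\<psi>) \<ge> A_sc(\<psi>, \<phi>) because \<Phi> is a distributor, and \<Phi>(\<psi>) \<le> A_sc(\<psi>, \<phi>) by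
  the unit of \<psi>. A functor F : A \<rightarrow> B into a symmetrically complete B extends by sending \<phi>
  to the object representing F_!\<phi>, which is again a symmetric left adjoint; the extension is
  unique because the unit 1 \<le> \<Or>_a \<phi>(a)^o \<phi>(a) exhibits every \<phi> as glued from representables.\<close>

locale inv_quantaloid =
  fixes Q :: "('o,'m) quantaloid"
  assumes involutive: "involutive_quantaloid Q"
begin

abbreviation obs where "obs \<equiv> q_obs Q"
abbreviation hom where "hom \<equiv> q_hom Q"
abbreviation one where "one \<equiv> q_id Q"
abbreviation lub where "lub \<equiv> qSup Q"
abbreviation qcomp (infixl "\<cdot>" 70) where "g \<cdot> f \<equiv> q_comp Q g f"
abbreviation qle (infix "\<sqsubseteq>" 50) where "f \<sqsubseteq> g \<equiv> q_le Q f g"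
abbreviation qinv ("_\<^sup>o" [1000] 1000) where "f\<^sup>o \<equiv> q_inv Q f"

lemma is_quantaloid: "quantaloid Q"
  using involutive by (simp add: involutive_quantaloid_def)

lemma hom_obs: "f \<in> hom X Y \<Longrightarrow> X \<in> obs \<and> Y \<in> obs"
  using is_quantaloid unfolding quantaloid_def by meson

lemma comp_closed: "f \<in> hom X Y \<Longrightarrow> g \<in> hom Y Z \<Longrightarrow> g \<cdot> f \<in> hom X Z"
  using is_quantaloid unfolding quantaloid_def by meson

lemma comp_assoc: "f \<in> hom W X \<Longrightarrow> g \<in> hom X Y \<Longrightarrow> h \<in> hom Y Z \<Longrightarrow> h \<cdot> (g \<cdot> f) = h \<cdot> g \<cdot> f"
  using is_quantaloid unfolding quantaloid_def by meson

lemma id_closed: "X \<in> obs \<Longrightarrow> one X \<in> hom X X"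
  using is_quantaloid unfolding quantaloid_def by meson

lemma comp_id_right [simp]: "f \<in> hom X Y \<Longrightarrow> f \<cdot> one X = f"
  using is_quantaloid unfolding quantaloid_def by meson

lemma comp_id_left [simp]: "f \<in> hom X Y \<Longrightarrow> one Y \<cdot> f = f"
  using is_quantaloid unfolding quantaloid_def by meson

lemma le_refl: "f \<in> hom X Y \<Longrightarrow> f \<sqsubseteq> f"
  using is_quantaloid unfolding quantaloid_def by meson

lemma le_antisym: "f \<in> hom X Y \<Longrightarrow> g \<in> hom X Y \<Longrightarrow> f \<sqsubseteq> g \<Longrightarrow> g \<sqsubseteq> f \<Longrightarrow> f = g"
  using is_quantaloid unfolding quantaloid_def by meson

lemma le_trans:
  "f \<in> hom X Y \<Longrightarrow> g \<in> hom X Y \<Longrightarrow> h \<in> hom X Y \<Longrightarrow> f \<sqsubseteq> g \<Longrightarrow> g \<sqsubseteq> h \<Longrightarrow> f \<sqsubseteq> h"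
  using is_quantaloid unfolding quantaloid_def by meson

lemma is_lub_exists: "X \<in> obs \<Longrightarrow> Y \<in> obs \<Longrightarrow> S \<subseteq> hom X Y \<Longrightarrow> \<exists>s. is_lub Q X Y S s"
  using is_quantaloid unfolding quantaloid_def by meson

lemma lub_comp_distrib:
  "f \<in> hom X Y \<Longrightarrow> S \<subseteq> hom Y Z \<Longrightarrow> lub Y Z S \<cdot> f = lub X Z ((\<lambda>g. g \<cdot> f) ` S)"
  using is_quantaloid unfolding quantaloid_def by meson

lemma comp_lub_distrib:
  "g \<in> hom Y Z \<Longrightarrow> S \<subseteq> hom X Y \<Longrightarrow> g \<cdot> lub X Y S = lub X Z ((\<lambda>f. g \<cdot> f) ` S)"
  using is_quantaloid unfolding quantaloid_def by meson

lemma inv_closed: "f \<in> hom X Y \<Longrightarrow> f\<^sup>o \<in> hom Y X"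
  using involutive unfolding involutive_quantaloid_def by meson

lemma inv_mono: "f \<in> hom X Y \<Longrightarrow> g \<in> hom X Y \<Longrightarrow> f \<sqsubseteq> g \<Longrightarrow> f\<^sup>o \<sqsubseteq> g\<^sup>o"
  using involutive unfolding involutive_quantaloid_def by meson

lemma inv_comp: "f \<in> hom X Y \<Longrightarrow> g \<in> hom Y Z \<Longrightarrow> (g \<cdot> f)\<^sup>o = f\<^sup>o \<cdot> g\<^sup>o"
  using involutive unfolding involutive_quantaloid_def by meson

lemma inv_inv [simp]: "f \<in> hom X Y \<Longrightarrow> f\<^sup>o\<^sup>o = f"
  using involutive unfolding involutive_quantaloid_def by meson

lemma le_trans3:
  "f \<in> hom X Y \<Longrightarrow> g \<in> hom X Y \<Longrightarrow> h \<in> hom X Y \<Longrightarrow> k \<in> hom X Y \<Longrightarrow>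
    f \<sqsubseteq> g \<Longrightarrow> g \<sqsubseteq> h \<Longrightarrow> h \<sqsubseteq> k \<Longrightarrow> f \<sqsubseteq> k"
  by (meson le_trans)

lemma is_lub_unique: "is_lub Q X Y S s \<Longrightarrow> is_lub Q X Y S s' \<Longrightarrow> s = s'"
  unfolding is_lub_def using le_antisym by blast

lemma lub_is_lub: "X \<in> obs \<Longrightarrow> Y \<in> obs \<Longrightarrow> S \<subseteq> hom X Y \<Longrightarrow> is_lub Q X Y S (lub X Y S)"
  unfolding qSup_def by (metis is_lub_exists is_lub_unique theI)

lemma lub_eqI: "is_lub Q X Y S s \<Longrightarrow> lub X Y S = s"
  unfolding qSup_def using is_lub_unique by blast

lemma lub_closed: "X \<in> obs \<Longrightarrow> Y \<in> obs \<Longrightarrow> S \<subseteq> hom X Y \<Longrightarrow> lub X Y S \<in> hom X Y"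
  using lub_is_lub unfolding is_lub_def by blast

lemma lub_upper: "X \<in> obs \<Longrightarrow> Y \<in> obs \<Longrightarrow> S \<subseteq> hom X Y \<Longrightarrow> t \<in> S \<Longrightarrow> t \<sqsubseteq> lub X Y S"
  using lub_is_lub unfolding is_lub_def by blast

lemma lub_least:
  "X \<in> obs \<Longrightarrow> Y \<in> obs \<Longrightarrow> S \<subseteq> hom X Y \<Longrightarrow> u \<in> hom X Y \<Longrightarrow> (\<And>t. t \<in> S \<Longrightarrow> t \<sqsubseteq> u) \<Longrightarrow>
    lub X Y S \<sqsubseteq> u"
  using lub_is_lub unfolding is_lub_def by blast

lemma le_lubI:
  "X \<in> obs \<Longrightarrow> Y \<in> obs \<Longrightarrow> S \<subseteq> hom X Y \<Longrightarrow> t \<in> S \<Longrightarrow> f \<in> hom X Y \<Longrightarrow> f \<sqsubseteq> t \<Longrightarrow>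
    f \<sqsubseteq> lub X Y S"
  by (meson lub_upper lub_closed le_trans subsetD)

lemma lub_singleton: "f \<in> hom X Y \<Longrightarrow> lub X Y {f} = f"
  by (rule lub_eqI) (auto simp: is_lub_def intro: le_refl)

lemma lub_pair: "f \<in> hom X Y \<Longrightarrow> g \<in> hom X Y \<Longrightarrow> f \<sqsubseteq> g \<Longrightarrow> lub X Y {f, g} = g"
  by (rule lub_eqI) (auto simp: is_lub_def intro: le_refl)

lemma comp_mono_right:
  assumes "g \<in> hom Y Z" "f \<in> hom X Y" "f' \<in> hom X Y" "f \<sqsubseteq> f'"
  shows "g \<cdot> f \<sqsubseteq> g \<cdot> f'"
proof -
  have "g \<cdot> f' = lub X Z ((\<lambda>f. g \<cdot> f) ` {f, f'})"
    using comp_lub_distrib[of g Y Z "{f, f'}" X] lub_pair assms by auto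
  then show ?thesis
    using lub_upper[of X Z "(\<lambda>f. g \<cdot> f) ` {f, f'}"] assms hom_obs comp_closed by auto
qed

lemma comp_mono_left:
  assumes "f \<in> hom X Y" "g \<in> hom Y Z" "g' \<in> hom Y Z" "g \<sqsubseteq> g'"
  shows "g \<cdot> f \<sqsubseteq> g' \<cdot> f"
proof -
  have "g' \<cdot> f = lub X Z ((\<lambda>g. g \<cdot> f) ` {g, g'})"
    using lub_comp_distrib[of f X Y "{g, g'}" Z] lub_pair assms by auto
  then show ?thesis
    using lub_upper[of X Z "(\<lambda>g. g \<cdot> f) ` {g, g'}"] assms hom_obs comp_closed by auto
qed

lemma comp_mono:
  assumes "f \<in> hom X Y" "f' \<in> hom X Y" "g \<in> hom Y Z" "g' \<in> hom Y Z" "f \<sqsubseteq> f'" "g \<sqsubseteq> g'"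
  shows "g \<cdot> f \<sqsubseteq> g' \<cdot> f'"
  using le_trans[OF comp_closed[OF assms(1,3)] comp_closed[OF assms(2,3)] comp_closed[OF assms(2,4)]]
    comp_mono_right[OF assms(3,1,2,5)] comp_mono_left[OF assms(2,3,4,6)] by blast

lemma comp_le_middle:
  assumes f: "f \<in> hom W X" and g: "g \<in> hom X Y" and h: "h \<in> hom Y Z'" and k: "k \<in> hom Z' Z"
    and m: "m \<in> hom X Z'" and le: "h \<cdot> g \<sqsubseteq> m"
  shows "k \<cdot> h \<cdot> (g \<cdot> f) \<sqsubseteq> k \<cdot> m \<cdot> f"
proof -
  have "h \<cdot> g \<cdot> f \<sqsubseteq> m \<cdot> f" using comp_mono_left[OF f comp_closed[OF g h] m le] .
  then have "k \<cdot> (h \<cdot> g \<cdot> f) \<sqsubseteq> k \<cdot> (m \<cdot> f)"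
    using comp_mono_right[OF k comp_closed[OF f comp_closed[OF g h]] comp_closed[OF f m]] by blast
  then show ?thesis
    using comp_assoc[OF comp_closed[OF f g] h k] comp_assoc[OF f g h] comp_assoc[OF f m k] by simp
qed

lemma lub_comp_le:
  assumes "Y \<in> obs" "Z \<in> obs" "S \<subseteq> hom Y Z" "f \<in> hom X Y" "u \<in> hom X Z"
    and "\<And>s. s \<in> S \<Longrightarrow> s \<cdot> f \<sqsubseteq> u"
  shows "lub Y Z S \<cdot> f \<sqsubseteq> u"
  unfolding lub_comp_distrib[OF assms(4,3)]
  by (rule lub_least) (use assms hom_obs comp_closed in auto)

lemma comp_lub_le:
  assumes "X \<in> obs" "Y \<in> obs" "S \<subseteq> hom X Y" "g \<in> hom Y Z" "u \<in> hom X Z"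
    and "\<And>s. s \<in> S \<Longrightarrow> g \<cdot> s \<sqsubseteq> u"
  shows "g \<cdot> lub X Y S \<sqsubseteq> u"
  unfolding comp_lub_distrib[OF assms(4,3)]
  by (rule lub_least) (use assms hom_obs comp_closed in auto)

lemma lub_comp_lub_le:
  assumes "X \<in> obs" "Y \<in> obs" "Z \<in> obs" "S \<subseteq> hom Y Z" "T \<subseteq> hom X Y" "u \<in> hom X Z"
    and "\<And>s t. s \<in> S \<Longrightarrow> t \<in> T \<Longrightarrow> s \<cdot> t \<sqsubseteq> u"
  shows "lub Y Z S \<cdot> lub X Y T \<sqsubseteq> u"
  by (rule comp_lub_le[OF assms(1,2,5) lub_closed[OF assms(2,3,4)] assms(6)])
    (rule lub_comp_le, use assms in auto)

lemma inv_id [simp]: "X \<in> obs \<Longrightarrow> (one X)\<^sup>o = one X"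
proof -
  assume X: "X \<in> obs"
  have one: "one X \<in> hom X X" and inv_one: "(one X)\<^sup>o \<in> hom X X"
    using X id_closed inv_closed by blast+
  have "(one X)\<^sup>o = (one X)\<^sup>o \<cdot> (one X)\<^sup>o\<^sup>o" using one inv_one by simp
  also have "\<dots> = ((one X)\<^sup>o \<cdot> one X)\<^sup>o" using inv_comp[OF one inv_one] by simp
  also have "\<dots> = one X" using one inv_one by simp
  finally show ?thesis .
qed

lemma inv_lub: 
  assumes "X \<in> obs" "Y \<in> obs" "S \<subseteq> hom X Y"
  shows "(lub X Y S)\<^sup>o = lub Y X (qinv ` S)"
proof (rule sym, rule lub_eqI, unfold is_lub_def, intro conjI ballI impI)
  have s: "lub X Y S \<in> hom X Y" using lub_closed[OF assms] .
  then show "(lub X Y S)\<^sup>o \<in> hom Y X" by (rule inv_closed)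
  show "t \<sqsubseteq> (lub X Y S)\<^sup>o" if "t \<in> qinv ` S" for t
    using that lub_upper[OF assms] inv_mono s assms(3) by blast
  show "(lub X Y S)\<^sup>o \<sqsubseteq> u" if u: "u \<in> hom Y X" and ub: "\<forall>t\<in>qinv ` S. t \<sqsubseteq> u" for u
  proof -
    have "lub X Y S \<sqsubseteq> u\<^sup>o"
    proof (rule lub_least[OF assms inv_closed[OF u]])
      fix t assume "t \<in> S"
      then show "t \<sqsubseteq> u\<^sup>o"
        using ub inv_mono[OF inv_closed u] assms(3) by fastforce
    qed
    then show ?thesis using inv_mono[OF s inv_closed[OF u]] u by simp
  qed
qed

lemma qcat_ty_obs: "qcat Q A \<Longrightarrow> x \<in> c_ob A \<Longrightarrow> c_ty A x \<in> obs"
  unfolding qcat_def by blast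

lemma qcat_hom_closed:
  "qcat Q A \<Longrightarrow> x \<in> c_ob A \<Longrightarrow> y \<in> c_ob A \<Longrightarrow> c_hom A y x \<in> hom (c_ty A x) (c_ty A y)"
  unfolding qcat_def by blast

lemma qcat_comp_le:
  "qcat Q A \<Longrightarrow> x \<in> c_ob A \<Longrightarrow> y \<in> c_ob A \<Longrightarrow> z \<in> c_ob A \<Longrightarrow>
    c_hom A z y \<cdot> c_hom A y x \<sqsubseteq> c_hom A z x"
  unfolding qcat_def by blast

lemma qcat_id_le: "qcat Q A \<Longrightarrow> x \<in> c_ob A \<Longrightarrow> one (c_ty A x) \<sqsubseteq> c_hom A x x"
  unfolding qcat_def by blast

lemma symcat_qcat: "symcat Q A \<Longrightarrow> qcat Q A"
  unfolding symcat_def by blast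

lemma symcat_hom_swap: "symcat Q A \<Longrightarrow> x \<in> c_ob A \<Longrightarrow> y \<in> c_ob A \<Longrightarrow> c_hom A x y = (c_hom A y x)\<^sup>o"
  unfolding symcat_def by blast

lemma qcat_le_hom_via_iso:
  assumes B: "qcat Q B" and b: "b0 \<in> c_ob B" "b1 \<in> c_ob B" "b2 \<in> c_ob B" "c_ty B b2 = c_ty B b1"
    and f: "f \<in> hom (c_ty B b1) (c_ty B b0)" "f \<sqsubseteq> c_hom B b0 b1"
    and iso: "one (c_ty B b1) \<sqsubseteq> c_hom B b1 b2"
  shows "f \<sqsubseteq> c_hom B b0 b2"
proof -
  have T: "c_ty B b1 \<in> obs" using qcat_ty_obs[OF B b(2)] .
  have h01: "c_hom B b0 b1 \<in> hom (c_ty B b1) (c_ty B b0)" using qcat_hom_closed[OF B b(2,1)] .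
  have h12: "c_hom B b1 b2 \<in> hom (c_ty B b1) (c_ty B b1)" using qcat_hom_closed[OF B b(3,2)] b(4) by simp
  have h02: "c_hom B b0 b2 \<in> hom (c_ty B b1) (c_ty B b0)" using qcat_hom_closed[OF B b(3,1)] b(4) by simp
  have "f \<cdot> one (c_ty B b1) \<sqsubseteq> c_hom B b0 b1 \<cdot> c_hom B b1 b2"
    using comp_mono[OF id_closed[OF T] h12 f(1) h01 iso f(2)] .
  then show ?thesis
    using le_trans[OF _ comp_closed[OF h12 h01] h02 _ qcat_comp_le[OF B b(3,2,1)]] f(1) by simp
qed

lemma qfunctor_ob: "qfunctor Q A B F \<Longrightarrow> x \<in> c_ob A \<Longrightarrow> F x \<in> c_ob B"
  unfolding qfunctor_def by blast

lemma qfunctor_ty: "qfunctor Q A B F \<Longrightarrow> x \<in> c_ob A \<Longrightarrow> c_ty B (F x) = c_ty A x"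
  unfolding qfunctor_def by blast

lemma qfunctor_le:
  "qfunctor Q A B F \<Longrightarrow> x \<in> c_ob A \<Longrightarrow> y \<in> c_ob A \<Longrightarrow> c_hom A y x \<sqsubseteq> c_hom B (F y) (F x)"
  unfolding qfunctor_def by blast

lemma iso_objI:
  assumes B: "symcat Q B" and b: "b \<in> c_ob B" "b' \<in> c_ob B" "c_ty B b = c_ty B b'"
    and le: "one (c_ty B b) \<sqsubseteq> c_hom B b b'"
  shows "iso_obj Q B b b'"
proof -
  have X: "c_ty B b \<in> obs" using qcat_ty_obs[OF symcat_qcat[OF B] b(1)] .
  have "c_hom B b b' \<in> hom (c_ty B b) (c_ty B b)"
    using qcat_hom_closed[OF symcat_qcat[OF B] b(2,1)] b(3) by simp
  then have "(one (c_ty B b))\<^sup>o \<sqsubseteq> (c_hom B b b')\<^sup>o"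
    using inv_mono[OF id_closed[OF X] _ le] by blast
  then have "one (c_ty B b') \<sqsubseteq> c_hom B b' b"
    using X b(3) symcat_hom_swap[OF B b(2,1)] by simp
  then show ?thesis unfolding iso_obj_def using b(3) le by simp
qed

lemma iso_obj_sym: "iso_obj Q B b b' \<Longrightarrow> iso_obj Q B b' b"
  unfolding iso_obj_def by auto

definition presheaf :: "('a,'o,'m) qcat \<Rightarrow> 'o \<Rightarrow> ('a \<Rightarrow> unit \<Rightarrow> 'm) \<Rightarrow> bool" where
  "presheaf A X \<phi> \<longleftrightarrow> (\<forall>a\<in>c_ob A. \<phi> a () \<in> hom X (c_ty A a)) \<and>
     (\<forall>a'\<in>c_ob A. \<forall>a\<in>c_ob A. c_hom A a' a \<cdot> \<phi> a () \<sqsubseteq> \<phi> a' ())"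

definition presheaf_hom ::
  "('a,'o,'m) qcat \<Rightarrow> 'o \<Rightarrow> ('a \<Rightarrow> unit \<Rightarrow> 'm) \<Rightarrow> 'o \<Rightarrow> ('a \<Rightarrow> unit \<Rightarrow> 'm) \<Rightarrow> 'm" where
  "presheaf_hom A Y \<psi> X \<phi> = lub X Y ((\<lambda>a. (\<psi> a ())\<^sup>o \<cdot> \<phi> a ()) ` c_ob A)"

text \<open>Unit and counit of the adjunction between \<phi> and its converse \<phi>^o.\<close>

definition sladj_presheaf :: "('a,'o,'m) qcat \<Rightarrow> 'o \<Rightarrow> ('a \<Rightarrow> unit \<Rightarrow> 'm) \<Rightarrow> bool" where
  "sladj_presheaf A X \<phi> \<longleftrightarrow> presheaf A X \<phi> \<and> one X \<sqsubseteq> presheaf_hom A X \<phi> X \<phi> \<and>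
     (\<forall>a\<in>c_ob A. \<forall>a'\<in>c_ob A. \<phi> a' () \<cdot> (\<phi> a ())\<^sup>o \<sqsubseteq> c_hom A a' a)"

lemma presheaf_closed: "presheaf A X \<phi> \<Longrightarrow> a \<in> c_ob A \<Longrightarrow> \<phi> a () \<in> hom X (c_ty A a)"
  unfolding presheaf_def by blast

lemma presheaf_inv_closed: "presheaf A X \<phi> \<Longrightarrow> a \<in> c_ob A \<Longrightarrow> (\<phi> a ())\<^sup>o \<in> hom (c_ty A a) X"
  by (rule inv_closed[OF presheaf_closed])

lemma presheaf_le:
  "presheaf A X \<phi> \<Longrightarrow> a \<in> c_ob A \<Longrightarrow> a' \<in> c_ob A \<Longrightarrow> c_hom A a' a \<cdot> \<phi> a () \<sqsubseteq> \<phi> a' ()"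
  unfolding presheaf_def by blast

lemma presheaf_inv_le:
  assumes A: "symcat Q A" and \<phi>: "presheaf A X \<phi>" and a: "a \<in> c_ob A" "a' \<in> c_ob A"
  shows "(\<phi> a ())\<^sup>o \<cdot> c_hom A a a' \<sqsubseteq> (\<phi> a' ())\<^sup>o"
proof -
  have f: "\<phi> a () \<in> hom X (c_ty A a)" "\<phi> a' () \<in> hom X (c_ty A a')"
    using presheaf_closed[OF \<phi>] a by blast+
  have g: "c_hom A a' a \<in> hom (c_ty A a) (c_ty A a')"
    using qcat_hom_closed[OF symcat_qcat[OF A] a] .
  have "(c_hom A a' a \<cdot> \<phi> a ())\<^sup>o \<sqsubseteq> (\<phi> a' ())\<^sup>o"
    using inv_mono[OF comp_closed[OF f(1) g] f(2) presheaf_le[OF \<phi> a]] .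
  then show ?thesis
    using inv_comp[OF f(1) g] symcat_hom_swap[OF A a] by simp
qed

lemma sladj_presheaf_presheaf: "sladj_presheaf A X \<phi> \<Longrightarrow> presheaf A X \<phi>"
  unfolding sladj_presheaf_def by blast

lemma sladj_presheaf_unit: "sladj_presheaf A X \<phi> \<Longrightarrow> one X \<sqsubseteq> presheaf_hom A X \<phi> X \<phi>"
  unfolding sladj_presheaf_def by blast

lemma sladj_presheaf_counit:
  "sladj_presheaf A X \<phi> \<Longrightarrow> a \<in> c_ob A \<Longrightarrow> a' \<in> c_ob A \<Longrightarrow> \<phi> a' () \<cdot> (\<phi> a ())\<^sup>o \<sqsubseteq> c_hom A a' a"
  unfolding sladj_presheaf_def by blast

lemma presheaf_hom_terms_closed:
  assumes "presheaf A Y \<psi>" "presheaf A X \<phi>"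
  shows "(\<lambda>a. (\<psi> a ())\<^sup>o \<cdot> \<phi> a ()) ` c_ob A \<subseteq> hom X Y"
  by (rule image_subsetI, rule comp_closed[OF presheaf_closed[OF assms(2)] presheaf_inv_closed[OF assms(1)]])

lemma presheaf_hom_closed:
  assumes "X \<in> obs" "Y \<in> obs" "presheaf A Y \<psi>" "presheaf A X \<phi>"
  shows "presheaf_hom A Y \<psi> X \<phi> \<in> hom X Y"
  unfolding presheaf_hom_def using lub_closed[OF assms(1,2) presheaf_hom_terms_closed[OF assms(3,4)]] .

lemma presheaf_hom_upper:
  assumes "X \<in> obs" "Y \<in> obs" "presheaf A Y \<psi>" "presheaf A X \<phi>" "a \<in> c_ob A"
  shows "(\<psi> a ())\<^sup>o \<cdot> \<phi> a () \<sqsubseteq> presheaf_hom A Y \<psi> X \<phi>"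
  unfolding presheaf_hom_def
  by (rule lub_upper[OF assms(1,2) presheaf_hom_terms_closed[OF assms(3,4)]]) (use assms(5) in simp)

lemma presheaf_hom_least:
  assumes "X \<in> obs" "Y \<in> obs" "presheaf A Y \<psi>" "presheaf A X \<phi>" "u \<in> hom X Y"
    and "\<And>a. a \<in> c_ob A \<Longrightarrow> (\<psi> a ())\<^sup>o \<cdot> \<phi> a () \<sqsubseteq> u"
  shows "presheaf_hom A Y \<psi> X \<phi> \<sqsubseteq> u"
  unfolding presheaf_hom_def
  by (rule lub_least[OF assms(1,2) presheaf_hom_terms_closed[OF assms(3,4)] assms(5)]) (use assms(6) in auto)

lemma presheaf_hom_swap:
  assumes X: "X \<in> obs" and Y: "Y \<in> obs" and \<psi>: "presheaf A Y \<psi>" and \<phi>: "presheaf A X \<phi>"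
  shows "presheaf_hom A X \<phi> Y \<psi> = (presheaf_hom A Y \<psi> X \<phi>)\<^sup>o"
proof -
  have "((\<psi> a ())\<^sup>o \<cdot> \<phi> a ())\<^sup>o = (\<phi> a ())\<^sup>o \<cdot> \<psi> a ()" if a: "a \<in> c_ob A" for a
    using inv_comp[OF presheaf_closed[OF \<phi> a] presheaf_inv_closed[OF \<psi> a]]
      presheaf_closed[OF \<psi> a] by simp
  then have "qinv ` (\<lambda>a. (\<psi> a ())\<^sup>o \<cdot> \<phi> a ()) ` c_ob A = (\<lambda>a. (\<phi> a ())\<^sup>o \<cdot> \<psi> a ()) ` c_ob A"
    unfolding image_image by (rule image_cong[OF refl])
  then show ?thesis
    unfolding presheaf_hom_def using inv_lub[OF X Y presheaf_hom_terms_closed[OF \<psi> \<phi>]] by simp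
qed

lemma le_presheaf_hom:
  assumes \<psi>: "sladj_presheaf A Z \<psi>" and g: "g \<in> hom X Z" and \<phi>: "presheaf A X \<phi>"
    and le: "\<And>a. a \<in> c_ob A \<Longrightarrow> \<psi> a () \<cdot> g \<sqsubseteq> \<phi> a ()"
  shows "g \<sqsubseteq> presheaf_hom A Z \<psi> X \<phi>"
proof -
  have X: "X \<in> obs" and Z: "Z \<in> obs" using hom_obs[OF g] by blast+
  note \<psi>' = sladj_presheaf_presheaf[OF \<psi>]
  have \<psi>\<psi>: "presheaf_hom A Z \<psi> Z \<psi> \<in> hom Z Z" using presheaf_hom_closed[OF Z Z \<psi>' \<psi>'] .
  have \<psi>\<phi>: "presheaf_hom A Z \<psi> X \<phi> \<in> hom X Z" using presheaf_hom_closed[OF X Z \<psi>' \<phi>] .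
  have "one Z \<cdot> g \<sqsubseteq> presheaf_hom A Z \<psi> Z \<psi> \<cdot> g"
    using comp_mono_left[OF g id_closed[OF Z] \<psi>\<psi> sladj_presheaf_unit[OF \<psi>]] .
  moreover have "presheaf_hom A Z \<psi> Z \<psi> \<cdot> g \<sqsubseteq> presheaf_hom A Z \<psi> X \<phi>"
    unfolding presheaf_hom_def[of A Z \<psi> Z \<psi>]
  proof (rule lub_comp_le[OF Z Z presheaf_hom_terms_closed[OF \<psi>' \<psi>'] g \<psi>\<phi>])
    fix t assume "t \<in> (\<lambda>a. (\<psi> a ())\<^sup>o \<cdot> \<psi> a ()) ` c_ob A"
    then obtain a where a: "a \<in> c_ob A" "t = (\<psi> a ())\<^sup>o \<cdot> \<psi> a ()" by blast
    have \<psi>a: "\<psi> a () \<in> hom Z (c_ty A a)" and \<psi>a': "(\<psi> a ())\<^sup>o \<in> hom (c_ty A a) Z"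
      using presheaf_closed[OF \<psi>' a(1)] presheaf_inv_closed[OF \<psi>' a(1)] .
    have \<phi>a: "\<phi> a () \<in> hom X (c_ty A a)" using presheaf_closed[OF \<phi> a(1)] .
    have "(\<psi> a ())\<^sup>o \<cdot> (\<psi> a () \<cdot> g) \<sqsubseteq> (\<psi> a ())\<^sup>o \<cdot> \<phi> a ()"
      using comp_mono_right[OF \<psi>a' comp_closed[OF g \<psi>a] \<phi>a le[OF a(1)]] .
    then show "t \<cdot> g \<sqsubseteq> presheaf_hom A Z \<psi> X \<phi>"
      using le_trans[OF comp_closed[OF comp_closed[OF g \<psi>a] \<psi>a'] comp_closed[OF \<phi>a \<psi>a'] \<psi>\<phi>
          _ presheaf_hom_upper[OF X Z \<psi>' \<phi> a(1)]] a(2) comp_assoc[OF g \<psi>a \<psi>a'] by simp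
  qed
  ultimately show ?thesis
    using le_trans[OF comp_closed[OF g id_closed[OF Z]] comp_closed[OF g \<psi>\<psi>] \<psi>\<phi>] g by simp
qed

lemma sladj_ucat_unfold:
  "sladj Q (ucat Q X) A \<phi> \<longleftrightarrow>
    presheaf A X \<phi> \<and>
    (\<forall>a\<in>c_ob A. \<phi> a () \<cdot> one X \<sqsubseteq> \<phi> a ()) \<and>
    (\<forall>a\<in>c_ob A. (\<phi> a ())\<^sup>o \<in> hom (c_ty A a) X) \<and>
    (\<forall>a\<in>c_ob A. one X \<cdot> (\<phi> a ())\<^sup>o \<sqsubseteq> (\<phi> a ())\<^sup>o) \<and>
    (\<forall>a\<in>c_ob A. \<forall>a'\<in>c_ob A. (\<phi> a ())\<^sup>o \<cdot> c_hom A a a' \<sqsubseteq> (\<phi> a' ())\<^sup>o) \<and>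
    one X \<sqsubseteq> presheaf_hom A X \<phi> X \<phi> \<and>
    (\<forall>a'\<in>c_ob A. \<forall>a\<in>c_ob A.
       lub (c_ty A a) (c_ty A a') {\<phi> a' () \<cdot> (\<phi> a ())\<^sup>o} \<sqsubseteq> c_hom A a' a)"
  unfolding sladj_def ladj_def dist_def dle_def dcomp_def dop_def ucat_def presheaf_def
    presheaf_hom_def by simp

lemma sladj_iff_sladj_presheaf:
  assumes A: "symcat Q A"
  shows "sladj Q (ucat Q X) A \<phi> \<longleftrightarrow> sladj_presheaf A X \<phi>"
proof -
  have counit: "lub (c_ty A a) (c_ty A a') {\<phi> a' () \<cdot> (\<phi> a ())\<^sup>o} = \<phi> a' () \<cdot> (\<phi> a ())\<^sup>o"
    if "presheaf A X \<phi>" "a \<in> c_ob A" "a' \<in> c_ob A" for a a'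
    using lub_singleton[OF comp_closed[OF presheaf_inv_closed[OF that(1,2)] presheaf_closed[OF that(1,3)]]] .
  have trivial: "\<phi> a () \<cdot> one X \<sqsubseteq> \<phi> a ()" "one X \<cdot> (\<phi> a ())\<^sup>o \<sqsubseteq> (\<phi> a ())\<^sup>o"
    if "presheaf A X \<phi>" "a \<in> c_ob A" for a
    using le_refl presheaf_closed[OF that] presheaf_inv_closed[OF that] by simp_all
  show ?thesis
    unfolding sladj_ucat_unfold sladj_presheaf_def
    using counit trivial presheaf_inv_closed presheaf_inv_le[OF A] by auto
qed

definition representative :: "('b,'o,'m) qcat \<Rightarrow> 'o \<Rightarrow> ('b \<Rightarrow> unit \<Rightarrow> 'm) \<Rightarrow> 'b" where
  "representative B X \<psi> = (SOME r. r \<in> c_ob B \<and> c_ty B r = X \<and> (\<forall>y\<in>c_ob B. \<psi> y () = c_hom B y r))"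

lemma representative:
  assumes "symcomplete Q B" "X \<in> obs" "sladj_presheaf B X \<psi>"
  shows "representative B X \<psi> \<in> c_ob B" "c_ty B (representative B X \<psi>) = X"
    "\<And>y. y \<in> c_ob B \<Longrightarrow> \<psi> y () = c_hom B y (representative B X \<psi>)"
proof -
  have "representable Q B X \<psi>"
    using assms sladj_iff_sladj_presheaf unfolding symcomplete_def by blast
  then have "\<exists>r. r \<in> c_ob B \<and> c_ty B r = X \<and> (\<forall>y\<in>c_ob B. \<psi> y () = c_hom B y r)"
    unfolding representable_def by blast
  then have "representative B X \<psi> \<in> c_ob B \<and> c_ty B (representative B X \<psi>) = X \<and>
      (\<forall>y\<in>c_ob B. \<psi> y () = c_hom B y (representative B X \<psi>))"
    unfolding representative_def by (rule someI_ex)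
  then show "representative B X \<psi> \<in> c_ob B" "c_ty B (representative B X \<psi>) = X"
    "\<And>y. y \<in> c_ob B \<Longrightarrow> \<psi> y () = c_hom B y (representative B X \<psi>)" by blast+
qed

lemma ladj_ucatD:
  assumes "ladj Q (ucat Q X) A \<phi> \<Psi>"
  shows "\<forall>a\<in>c_ob A. \<phi> a () \<in> hom X (c_ty A a)"
    and "\<forall>a\<in>c_ob A. \<Psi> () a \<in> hom (c_ty A a) X"
    and "\<forall>a\<in>c_ob A. \<forall>a'\<in>c_ob A. \<Psi> () a \<cdot> c_hom A a a' \<sqsubseteq> \<Psi> () a'"
    and "one X \<sqsubseteq> lub X X ((\<lambda>a. \<Psi> () a \<cdot> \<phi> a ()) ` c_ob A)"
    and "\<forall>a'\<in>c_ob A. \<forall>a\<in>c_ob A. lub (c_ty A a) (c_ty A a') {\<phi> a' () \<cdot> \<Psi> () a} \<sqsubseteq> c_hom A a' a"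
  using assms unfolding ladj_def dist_def dle_def dcomp_def ucat_def by simp_all

text \<open>Right adjoints are unique: the unit of one and the counit of the other compare them.\<close>

lemma right_adjoint_le:
  assumes X: "X \<in> obs" and A: "qcat Q A" and a: "a \<in> c_ob A"
    and adj1: "ladj Q (ucat Q X) A \<phi> \<Psi>1" and adj2: "ladj Q (ucat Q X) A \<phi> \<Psi>2"
  shows "\<Psi>1 () a \<sqsubseteq> \<Psi>2 () a"
proof -
  note adj1 = ladj_ucatD[OF adj1] and adj2 = ladj_ucatD[OF adj2]
  define S where "S = (\<lambda>b. \<Psi>2 () b \<cdot> \<phi> b ()) ` c_ob A"
  have S: "S \<subseteq> hom X X"
    unfolding S_def using adj2(1,2) by (auto intro: comp_closed)
  have r1: "\<Psi>1 () a \<in> hom (c_ty A a) X" and r2: "\<Psi>2 () a \<in> hom (c_ty A a) X"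
    using adj1(2) adj2(2) a by blast+
  have unit: "one X \<cdot> \<Psi>1 () a \<sqsubseteq> lub X X S \<cdot> \<Psi>1 () a"
    using comp_mono_left[OF r1 id_closed[OF X] lub_closed[OF X X S]] adj2(4)
    unfolding S_def by blast
  have counit: "lub X X S \<cdot> \<Psi>1 () a \<sqsubseteq> \<Psi>2 () a"
  proof (rule lub_comp_le[OF X X S r1 r2])
    fix t assume "t \<in> S"
    then obtain b where b: "b \<in> c_ob A" "t = \<Psi>2 () b \<cdot> \<phi> b ()" unfolding S_def by blast
    have f: "\<phi> b () \<in> hom X (c_ty A b)" and g: "\<Psi>2 () b \<in> hom (c_ty A b) X"
      using adj2(1,2) b(1) by blast+
    have fr: "\<phi> b () \<cdot> \<Psi>1 () a \<in> hom (c_ty A a) (c_ty A b)" using comp_closed[OF r1 f] .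
    have h: "c_hom A b a \<in> hom (c_ty A a) (c_ty A b)" using qcat_hom_closed[OF A a b(1)] .
    have "\<phi> b () \<cdot> \<Psi>1 () a \<sqsubseteq> c_hom A b a"
      using adj1(5) a b(1) lub_singleton[OF fr] by metis
    then have "\<Psi>2 () b \<cdot> (\<phi> b () \<cdot> \<Psi>1 () a) \<sqsubseteq> \<Psi>2 () b \<cdot> c_hom A b a"
      using comp_mono_right[OF g fr h] by blast
    moreover have "\<Psi>2 () b \<cdot> c_hom A b a \<sqsubseteq> \<Psi>2 () a" using adj2(3) a b(1) by blast
    ultimately show "t \<cdot> \<Psi>1 () a \<sqsubseteq> \<Psi>2 () a"
      using le_trans[OF comp_closed[OF fr g] comp_closed[OF h g] r2] b(2) comp_assoc[OF r1 f g]
      by simp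
  qed
  show ?thesis
    using le_trans[OF comp_closed[OF r1 id_closed[OF X]] comp_closed[OF r1 lub_closed[OF X X S]] r2
        unit counit] r1 by simp
qed

lemma radj_sladj:
  assumes X: "X \<in> obs" and A: "symcat Q A" and \<phi>: "sladj Q (ucat Q X) A \<phi>"
  shows "radj Q (ucat Q X) A \<phi> = (\<lambda>_ a. if a \<in> c_ob A then (\<phi> a ())\<^sup>o else undefined)"
    (is "_ = ?R")
proof -
  have adj: "ladj Q (ucat Q X) A \<phi> ?R"
    using \<phi> unfolding sladj_def ladj_def dist_def dle_def dcomp_def ucat_def dop_def
    by (simp cong: image_cong)
  have "\<Psi> = ?R" if "ladj Q (ucat Q X) A \<phi> \<Psi>" and "dext A (ucat Q X) \<Psi>" for \<Psi>
  proof (intro ext)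
    fix u :: unit and a
    show "\<Psi> u a = ?R u a"
    proof (cases "a \<in> c_ob A")
      case True
      have "\<Psi> () a = ?R () a"
        using le_antisym[OF _ _ right_adjoint_le[OF X symcat_qcat[OF A] True that(1) adj]
            right_adjoint_le[OF X symcat_qcat[OF A] True adj that(1)]]
          ladj_ucatD(2)[OF that(1)] ladj_ucatD(2)[OF adj] True by blast
      then show ?thesis by simp
    next
      case False
      then show ?thesis using that(2) unfolding dext_def ucat_def by simp
    qed
  qed
  moreover have "dext A (ucat Q X) ?R" unfolding dext_def ucat_def by simp
  ultimately show ?thesis unfolding radj_def using adj by (intro the_equality) blast+
qed

lemma symcompletion_ob_iff:
  assumes "symcat Q A"
  shows "(X, \<phi>) \<in> c_ob (symcompletion Q A) \<longleftrightarrow>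
    X \<in> obs \<and> \<phi> \<in> extensional (c_ob A) \<and> sladj_presheaf A X \<phi>"
  using sladj_iff_sladj_presheaf[OF assms]
  unfolding symcompletion_def cauchy_def sladj_def by auto

lemma symcompletion_ty: "c_ty (symcompletion Q A) = fst"
  unfolding symcompletion_def cauchy_def by simp

lemma symcompletion_hom:
  assumes A: "symcat Q A" and "(Y, \<psi>) \<in> c_ob (symcompletion Q A)"
  shows "c_hom (symcompletion Q A) (Y, \<psi>) (X, \<phi>) = presheaf_hom A Y \<psi> X \<phi>"
proof -
  have Y: "Y \<in> obs" and \<psi>: "sladj Q (ucat Q Y) A \<psi>"
    using assms symcompletion_ob_iff sladj_iff_sladj_presheaf by blast+
  have "c_hom (symcompletion Q A) (Y, \<psi>) (X, \<phi>) =
      dcomp Q (ucat Q X) A (ucat Q Y) (radj Q (ucat Q Y) A \<psi>) \<phi> () ()"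
    unfolding symcompletion_def cauchy_def by simp
  also have "\<dots> = presheaf_hom A Y \<psi> X \<phi>"
    unfolding radj_sladj[OF Y A \<psi>] dcomp_def presheaf_hom_def by (simp add: ucat_def cong: image_cong)
  finally show ?thesis .
qed

end

locale sym_qcat = inv_quantaloid Q for Q :: "('o,'m) quantaloid" +
  fixes A :: "('a,'o,'m) qcat"
  assumes symmetric: "symcat Q A"
begin

abbreviation SC where "SC \<equiv> symcompletion Q A"

abbreviation yoneda_presheaf :: "'a \<Rightarrow> 'a \<Rightarrow> unit \<Rightarrow> 'm" where
  "yoneda_presheaf x \<equiv> restrict (\<lambda>y _. c_hom A y x) (c_ob A)"

lemma qcat: "qcat Q A"
  using symcat_qcat[OF symmetric] .

lemma symcompletion_obE:
  assumes "p \<in> c_ob SC"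
  obtains X \<phi> where "p = (X, \<phi>)" "X \<in> obs" "\<phi> \<in> extensional (c_ob A)" "sladj_presheaf A X \<phi>"
  using assms symcompletion_ob_iff[OF symmetric] by (cases p) blast

lemma presheaf_hom_comp_le:
  assumes X: "X \<in> obs" and Y: "Y \<in> obs" and Z: "Z \<in> obs"
    and \<rho>: "presheaf A Z \<rho>" and \<psi>: "sladj_presheaf A Y \<psi>" and \<phi>: "presheaf A X \<phi>"
  shows "presheaf_hom A Z \<rho> Y \<psi> \<cdot> presheaf_hom A Y \<psi> X \<phi> \<sqsubseteq> presheaf_hom A Z \<rho> X \<phi>"
  unfolding presheaf_hom_def
proof (rule lub_comp_lub_le[OF X Y Z presheaf_hom_terms_closed[OF \<rho> sladj_presheaf_presheaf[OF \<psi>]]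
      presheaf_hom_terms_closed[OF sladj_presheaf_presheaf[OF \<psi>] \<phi>]
      presheaf_hom_closed[OF X Z \<rho> \<phi>, unfolded presheaf_hom_def]])
  note \<psi>' = sladj_presheaf_presheaf[OF \<psi>]
  fix u t
  assume "u \<in> (\<lambda>a. (\<rho> a ())\<^sup>o \<cdot> \<psi> a ()) ` c_ob A" "t \<in> (\<lambda>b. (\<psi> b ())\<^sup>o \<cdot> \<phi> b ()) ` c_ob A"
  then obtain a b where a: "a \<in> c_ob A" "u = (\<rho> a ())\<^sup>o \<cdot> \<psi> a ()"
    and b: "b \<in> c_ob A" "t = (\<psi> b ())\<^sup>o \<cdot> \<phi> b ()" by blast
  have \<phi>b: "\<phi> b () \<in> hom X (c_ty A b)" using presheaf_closed[OF \<phi> b(1)] .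
  have \<psi>b: "(\<psi> b ())\<^sup>o \<in> hom (c_ty A b) Y" using presheaf_inv_closed[OF \<psi>' b(1)] .
  have \<psi>a: "\<psi> a () \<in> hom Y (c_ty A a)" using presheaf_closed[OF \<psi>' a(1)] .
  have \<rho>a: "(\<rho> a ())\<^sup>o \<in> hom (c_ty A a) Z" using presheaf_inv_closed[OF \<rho> a(1)] .
  have \<rho>b: "(\<rho> b ())\<^sup>o \<in> hom (c_ty A b) Z" using presheaf_inv_closed[OF \<rho> b(1)] .
  have ab: "c_hom A a b \<in> hom (c_ty A b) (c_ty A a)" using qcat_hom_closed[OF qcat b(1) a(1)] .
  have 1: "u \<cdot> t \<sqsubseteq> (\<rho> a ())\<^sup>o \<cdot> c_hom A a b \<cdot> \<phi> b ()"
    unfolding a(2) b(2)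
    by (rule comp_le_middle[OF \<phi>b \<psi>b \<psi>a \<rho>a ab sladj_presheaf_counit[OF \<psi> b(1) a(1)]])
  have 2: "(\<rho> a ())\<^sup>o \<cdot> c_hom A a b \<cdot> \<phi> b () \<sqsubseteq> (\<rho> b ())\<^sup>o \<cdot> \<phi> b ()"
    by (rule comp_mono_left[OF \<phi>b comp_closed[OF ab \<rho>a] \<rho>b presheaf_inv_le[OF symmetric \<rho> a(1) b(1)]])
  have 3: "(\<rho> b ())\<^sup>o \<cdot> \<phi> b () \<sqsubseteq> presheaf_hom A Z \<rho> X \<phi>"
    by (rule presheaf_hom_upper[OF X Z \<rho> \<phi> b(1)])
  have "u \<cdot> t \<in> hom X Z"
    unfolding a(2) b(2) using comp_closed[OF comp_closed[OF \<phi>b \<psi>b] comp_closed[OF \<psi>a \<rho>a]] .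
  then show "u \<cdot> t \<sqsubseteq> lub X Z ((\<lambda>a. (\<rho> a ())\<^sup>o \<cdot> \<phi> a ()) ` c_ob A)"
    using le_trans3[OF _ comp_closed[OF \<phi>b comp_closed[OF ab \<rho>a]] comp_closed[OF \<phi>b \<rho>b]
        presheaf_hom_closed[OF X Z \<rho> \<phi>] 1 2 3]
    unfolding presheaf_hom_def by blast
qed

lemma yoneda_eq: "yoneda Q A x = (c_ty A x, yoneda_presheaf x)"
  unfolding yoneda_def ..

lemma sladj_presheaf_yoneda:
  assumes x: "x \<in> c_ob A"
  shows "sladj_presheaf A (c_ty A x) (yoneda_presheaf x)"
  unfolding sladj_presheaf_def presheaf_def
proof (intro conjI ballI)
  fix a assume "a \<in> c_ob A"
  then show "yoneda_presheaf x a () \<in> hom (c_ty A x) (c_ty A a)"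
    using qcat_hom_closed[OF qcat x] by simp
next
  fix a a' assume "a' \<in> c_ob A" "a \<in> c_ob A"
  then show "c_hom A a' a \<cdot> yoneda_presheaf x a () \<sqsubseteq> yoneda_presheaf x a' ()"
    using qcat_comp_le[OF qcat x] by simp
next
  fix a a' assume "a \<in> c_ob A" "a' \<in> c_ob A"
  then show "yoneda_presheaf x a' () \<cdot> (yoneda_presheaf x a ())\<^sup>o \<sqsubseteq> c_hom A a' a"
    using qcat_comp_le[OF qcat _ x] symcat_hom_swap[OF symmetric x] by simp
next
  have X: "c_ty A x \<in> obs" using qcat_ty_obs[OF qcat x] .
  have xx: "c_hom A x x \<in> hom (c_ty A x) (c_ty A x)" using qcat_hom_closed[OF qcat x x] .
  have "one (c_ty A x) \<cdot> one (c_ty A x) \<sqsubseteq> c_hom A x x \<cdot> c_hom A x x"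
    using comp_mono[OF id_closed[OF X] xx id_closed[OF X] xx] qcat_id_le[OF qcat x] by blast
  then have "one (c_ty A x) \<sqsubseteq> (yoneda_presheaf x x ())\<^sup>o \<cdot> yoneda_presheaf x x ()"
    using x comp_id_left[OF id_closed[OF X]] symcat_hom_swap[OF symmetric x x] by simp
  moreover have "presheaf A (c_ty A x) (yoneda_presheaf x)"
    unfolding presheaf_def using qcat_hom_closed[OF qcat x] qcat_comp_le[OF qcat x] by simp
  ultimately show "one (c_ty A x) \<sqsubseteq>
      presheaf_hom A (c_ty A x) (yoneda_presheaf x) (c_ty A x) (yoneda_presheaf x)"
    unfolding presheaf_hom_def
    using le_lubI[OF X X presheaf_hom_terms_closed _ id_closed[OF X]] x by blast
qed

lemma yoneda_in_symcompletion: "x \<in> c_ob A \<Longrightarrow> yoneda Q A x \<in> c_ob SC"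
  unfolding yoneda_eq symcompletion_ob_iff[OF symmetric]
  using qcat_ty_obs[OF qcat] sladj_presheaf_yoneda by simp

lemma presheaf_hom_yoneda_left:
  assumes X: "X \<in> obs" and \<phi>: "presheaf A X \<phi>" and x: "x \<in> c_ob A"
  shows "presheaf_hom A (c_ty A x) (yoneda_presheaf x) X \<phi> = \<phi> x ()"
proof -
  have Y: "presheaf A (c_ty A x) (yoneda_presheaf x)"
    using sladj_presheaf_presheaf[OF sladj_presheaf_yoneda[OF x]] .
  have Tx: "c_ty A x \<in> obs" using qcat_ty_obs[OF qcat x] .
  have \<phi>x: "\<phi> x () \<in> hom X (c_ty A x)" using presheaf_closed[OF \<phi> x] .
  have xx: "c_hom A x x \<in> hom (c_ty A x) (c_ty A x)" using qcat_hom_closed[OF qcat x x] .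
  have "presheaf_hom A (c_ty A x) (yoneda_presheaf x) X \<phi> \<sqsubseteq> \<phi> x ()"
  proof (rule presheaf_hom_least[OF X Tx Y \<phi> \<phi>x])
    fix a assume "a \<in> c_ob A"
    then show "(yoneda_presheaf x a ())\<^sup>o \<cdot> \<phi> a () \<sqsubseteq> \<phi> x ()"
      using presheaf_le[OF \<phi> _ x] symcat_hom_swap[OF symmetric x] by simp
  qed
  moreover have "\<phi> x () \<sqsubseteq> presheaf_hom A (c_ty A x) (yoneda_presheaf x) X \<phi>"
  proof -
    have "one (c_ty A x) \<cdot> \<phi> x () \<sqsubseteq> c_hom A x x \<cdot> \<phi> x ()"
      using comp_mono_left[OF \<phi>x id_closed[OF Tx] xx qcat_id_le[OF qcat x]] .
    then have "\<phi> x () \<sqsubseteq> (yoneda_presheaf x x ())\<^sup>o \<cdot> \<phi> x ()"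
      using \<phi>x x symcat_hom_swap[OF symmetric x x] by simp
    then show ?thesis
      using le_trans[OF \<phi>x _ presheaf_hom_closed[OF X Tx Y \<phi>] _ presheaf_hom_upper[OF X Tx Y \<phi> x]]
        comp_closed[OF \<phi>x xx] x symcat_hom_swap[OF symmetric x x] by simp
  qed
  ultimately show ?thesis
    using le_antisym[OF presheaf_hom_closed[OF X Tx Y \<phi>] \<phi>x] by blast
qed

lemma symcompletion_hom_yoneda_left:
  assumes p: "p \<in> c_ob SC" and x: "x \<in> c_ob A"
  shows "c_hom SC (yoneda Q A x) p = snd p x ()"
proof -
  obtain Z \<psi> where z: "p = (Z, \<psi>)" "Z \<in> obs" "sladj_presheaf A Z \<psi>"
    using p by (rule symcompletion_obE)
  have "c_hom SC (yoneda Q A x) p = presheaf_hom A (c_ty A x) (yoneda_presheaf x) Z \<psi>"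
    using symcompletion_hom[OF symmetric yoneda_in_symcompletion[OF x, unfolded yoneda_eq]] z(1)
    by (simp add: yoneda_eq)
  also have "\<dots> = \<psi> x ()"
    using presheaf_hom_yoneda_left[OF z(2) sladj_presheaf_presheaf[OF z(3)] x] .
  finally show ?thesis using z(1) by simp
qed

lemma symcompletion_hom_yoneda_right:
  assumes p: "p \<in> c_ob SC" and x: "x \<in> c_ob A"
  shows "c_hom SC p (yoneda Q A x) = (snd p x ())\<^sup>o"
proof -
  obtain Z \<psi> where z: "p = (Z, \<psi>)" "Z \<in> obs" "sladj_presheaf A Z \<psi>"
    using p by (rule symcompletion_obE)
  have "c_hom SC p (yoneda Q A x) = presheaf_hom A Z \<psi> (c_ty A x) (yoneda_presheaf x)"
    using symcompletion_hom[OF symmetric] p z(1) by (simp add: yoneda_eq)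
  also have "\<dots> = (presheaf_hom A (c_ty A x) (yoneda_presheaf x) Z \<psi>)\<^sup>o"
    using presheaf_hom_swap[OF z(2) qcat_ty_obs[OF qcat x]
        sladj_presheaf_presheaf[OF sladj_presheaf_yoneda[OF x]] sladj_presheaf_presheaf[OF z(3)]] .
  also have "\<dots> = (\<psi> x ())\<^sup>o"
    using presheaf_hom_yoneda_left[OF z(2) sladj_presheaf_presheaf[OF z(3)] x] by simp
  finally show ?thesis using z(1) by simp
qed

lemma symcompletion_hom_yoneda:
  "x \<in> c_ob A \<Longrightarrow> y \<in> c_ob A \<Longrightarrow> c_hom SC (yoneda Q A y) (yoneda Q A x) = c_hom A y x"
  using symcompletion_hom_yoneda_left[OF yoneda_in_symcompletion] by (simp add: yoneda_eq)

lemma symcompletion_ty_yoneda: "c_ty SC (yoneda Q A x) = c_ty A x"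
  by (simp add: symcompletion_ty yoneda_eq)

lemma symcat_symcompletion: "symcat Q SC"
  unfolding symcat_def qcat_def
proof (intro conjI ballI)
  fix p assume "p \<in> c_ob SC"
  then show "c_ty SC p \<in> obs" by (rule symcompletion_obE) (simp add: symcompletion_ty)
next
  fix p q assume p: "p \<in> c_ob SC" and q: "q \<in> c_ob SC"
  obtain X \<phi> where x: "p = (X, \<phi>)" "X \<in> obs" "sladj_presheaf A X \<phi>"
    using p by (rule symcompletion_obE)
  obtain Y \<psi> where y: "q = (Y, \<psi>)" "Y \<in> obs" "sladj_presheaf A Y \<psi>"
    using q by (rule symcompletion_obE)
  have hom: "c_hom SC q p = presheaf_hom A Y \<psi> X \<phi>" "c_hom SC p q = presheaf_hom A X \<phi> Y \<psi>"
    using symcompletion_hom[OF symmetric] p q x(1) y(1) by simp_all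
  show "c_hom SC q p \<in> hom (c_ty SC p) (c_ty SC q)"
    using presheaf_hom_closed[OF x(2) y(2) sladj_presheaf_presheaf[OF y(3)]
        sladj_presheaf_presheaf[OF x(3)]] hom x(1) y(1) by (simp add: symcompletion_ty)
  show "c_hom SC p q = (c_hom SC q p)\<^sup>o"
    using presheaf_hom_swap[OF x(2) y(2) sladj_presheaf_presheaf[OF y(3)]
        sladj_presheaf_presheaf[OF x(3)]] hom by simp
next
  fix p q r assume p: "p \<in> c_ob SC" and q: "q \<in> c_ob SC" and r: "r \<in> c_ob SC"
  obtain X \<phi> where x: "p = (X, \<phi>)" "X \<in> obs" "sladj_presheaf A X \<phi>"
    using p by (rule symcompletion_obE)
  obtain Y \<psi> where y: "q = (Y, \<psi>)" "Y \<in> obs" "sladj_presheaf A Y \<psi>"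
    using q by (rule symcompletion_obE)
  obtain Z \<rho> where z: "r = (Z, \<rho>)" "Z \<in> obs" "sladj_presheaf A Z \<rho>"
    using r by (rule symcompletion_obE)
  show "c_hom SC r q \<cdot> c_hom SC q p \<sqsubseteq> c_hom SC r p"
    using presheaf_hom_comp_le[OF x(2) y(2) z(2) sladj_presheaf_presheaf[OF z(3)] y(3)
        sladj_presheaf_presheaf[OF x(3)]] symcompletion_hom[OF symmetric] q r x(1) y(1) z(1)
    by simp
next
  fix p assume p: "p \<in> c_ob SC"
  obtain X \<phi> where x: "p = (X, \<phi>)" "X \<in> obs" "sladj_presheaf A X \<phi>"
    using p by (rule symcompletion_obE)
  show "one (c_ty SC p) \<sqsubseteq> c_hom SC p p"
    using sladj_presheaf_unit[OF x(3)] symcompletion_hom[OF symmetric] p x(1)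
    by (simp add: symcompletion_ty)
qed

lemma qfunctor_yoneda: "qfunctor Q A SC (yoneda Q A)"
  unfolding qfunctor_def
  using yoneda_in_symcompletion symcompletion_ty_yoneda symcompletion_hom_yoneda
    le_refl[OF qcat_hom_closed[OF qcat]] by simp

subsection \<open>Symmetric completeness of the symmetric completion\<close>

definition restrict_yoneda :: "('o \<times> ('a \<Rightarrow> unit \<Rightarrow> 'm) \<Rightarrow> unit \<Rightarrow> 'm) \<Rightarrow> 'a \<Rightarrow> unit \<Rightarrow> 'm" where
  "restrict_yoneda \<Phi> = restrict (\<lambda>a _. \<Phi> (yoneda Q A a) ()) (c_ob A)"

lemma restrict_yoneda_apply: "a \<in> c_ob A \<Longrightarrow> restrict_yoneda \<Phi> a () = \<Phi> (yoneda Q A a) ()"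
  unfolding restrict_yoneda_def by simp

lemma presheaf_restrict_yoneda:
  assumes \<Phi>: "presheaf SC X \<Phi>"
  shows "presheaf A X (restrict_yoneda \<Phi>)"
  unfolding presheaf_def
proof (intro conjI ballI)
  fix a assume "a \<in> c_ob A"
  then show "restrict_yoneda \<Phi> a () \<in> hom X (c_ty A a)"
    using presheaf_closed[OF \<Phi> yoneda_in_symcompletion] symcompletion_ty_yoneda
    by (simp add: restrict_yoneda_apply)
next
  fix a a' assume "a' \<in> c_ob A" "a \<in> c_ob A"
  then show "c_hom A a' a \<cdot> restrict_yoneda \<Phi> a () \<sqsubseteq> restrict_yoneda \<Phi> a' ()"
    using presheaf_le[OF \<Phi> yoneda_in_symcompletion yoneda_in_symcompletion] symcompletion_hom_yoneda
    by (simp add: restrict_yoneda_apply)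
qed

lemma restrict_yoneda_ge:
  assumes \<Phi>: "presheaf SC X \<Phi>" and p: "(Z, \<psi>) \<in> c_ob SC" and a: "a \<in> c_ob A"
  shows "\<psi> a () \<cdot> \<Phi> (Z, \<psi>) () \<sqsubseteq> restrict_yoneda \<Phi> a ()"
  using presheaf_le[OF \<Phi> p yoneda_in_symcompletion[OF a]] symcompletion_hom_yoneda_left[OF p a] a
  by (simp add: restrict_yoneda_apply)

lemma presheaf_eq_presheaf_hom_restrict_yoneda:
  assumes X: "X \<in> obs" and \<Phi>: "presheaf SC X \<Phi>" and p: "(Z, \<psi>) \<in> c_ob SC"
  shows "\<Phi> (Z, \<psi>) () = presheaf_hom A Z \<psi> X (restrict_yoneda \<Phi>)"
proof -
  have Z: "Z \<in> obs" and \<psi>: "sladj_presheaf A Z \<psi>"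
    using p symcompletion_ob_iff[OF symmetric] by blast+
  note \<phi> = presheaf_restrict_yoneda[OF \<Phi>]
  have g: "\<Phi> (Z, \<psi>) () \<in> hom X Z" using presheaf_closed[OF \<Phi> p] by (simp add: symcompletion_ty)
  have "presheaf_hom A Z \<psi> X (restrict_yoneda \<Phi>) \<sqsubseteq> \<Phi> (Z, \<psi>) ()"
  proof (rule presheaf_hom_least[OF X Z sladj_presheaf_presheaf[OF \<psi>] \<phi> g])
    fix a assume a: "a \<in> c_ob A"
    show "(\<psi> a ())\<^sup>o \<cdot> restrict_yoneda \<Phi> a () \<sqsubseteq> \<Phi> (Z, \<psi>) ()"
      using presheaf_le[OF \<Phi> yoneda_in_symcompletion[OF a] p] symcompletion_hom_yoneda_right[OF p a] a
      by (simp add: restrict_yoneda_apply)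
  qed
  moreover have "\<Phi> (Z, \<psi>) () \<sqsubseteq> presheaf_hom A Z \<psi> X (restrict_yoneda \<Phi>)"
    using le_presheaf_hom[OF \<psi> g \<phi> restrict_yoneda_ge[OF \<Phi> p]] .
  ultimately show ?thesis
    using le_antisym[OF g presheaf_hom_closed[OF X Z sladj_presheaf_presheaf[OF \<psi>] \<phi>]] by blast
qed

text \<open>For the unit: \<Phi>(p) is the hom of the completion from (X, \<phi>) to p, so each term
  \<Phi>(p)^o \<Phi>(p) of the unit join is a composite through p, bounded by the hom of (X, \<phi>) to itself.\<close>

lemma sladj_presheaf_restrict_yoneda:
  assumes X: "X \<in> obs" and \<Phi>: "sladj_presheaf SC X \<Phi>"
  shows "sladj_presheaf A X (restrict_yoneda \<Phi>)"
  unfolding sladj_presheaf_def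
proof (intro conjI ballI)
  note \<Phi>' = sladj_presheaf_presheaf[OF \<Phi>]
  note \<phi> = presheaf_restrict_yoneda[OF \<Phi>']
  let ?\<phi> = "restrict_yoneda \<Phi>"
  show "presheaf A X ?\<phi>" by (rule \<phi>)
  show "?\<phi> a' () \<cdot> (?\<phi> a ())\<^sup>o \<sqsubseteq> c_hom A a' a" if "a \<in> c_ob A" "a' \<in> c_ob A" for a a'
    using sladj_presheaf_counit[OF \<Phi> yoneda_in_symcompletion yoneda_in_symcompletion]
      symcompletion_hom_yoneda that by (simp add: restrict_yoneda_apply)
  have \<phi>\<phi>: "presheaf_hom A X ?\<phi> X ?\<phi> \<in> hom X X" using presheaf_hom_closed[OF X X \<phi> \<phi>] .
  have "presheaf_hom SC X \<Phi> X \<Phi> \<sqsubseteq> presheaf_hom A X ?\<phi> X ?\<phi>"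
  proof (rule presheaf_hom_least[OF X X \<Phi>' \<Phi>' \<phi>\<phi>])
    fix p assume p: "p \<in> c_ob SC"
    obtain Z \<psi> where z: "p = (Z, \<psi>)" "Z \<in> obs" "sladj_presheaf A Z \<psi>"
      using p by (rule symcompletion_obE)
    note \<psi>' = sladj_presheaf_presheaf[OF z(3)]
    have \<Phi>p: "\<Phi> p () = presheaf_hom A Z \<psi> X ?\<phi>"
      using presheaf_eq_presheaf_hom_restrict_yoneda[OF X \<Phi>'] p z(1) by simp
    have "(\<Phi> p ())\<^sup>o \<cdot> \<Phi> p () = presheaf_hom A X ?\<phi> Z \<psi> \<cdot> presheaf_hom A Z \<psi> X ?\<phi>"
      unfolding \<Phi>p using presheaf_hom_swap[OF X z(2) \<psi>' \<phi>] by simp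
    then show "(\<Phi> p ())\<^sup>o \<cdot> \<Phi> p () \<sqsubseteq> presheaf_hom A X ?\<phi> X ?\<phi>"
      using presheaf_hom_comp_le[OF X z(2) X \<phi> z(3) \<phi>] by simp
  qed
  then show "one X \<sqsubseteq> presheaf_hom A X ?\<phi> X ?\<phi>"
    using le_trans[OF id_closed[OF X] presheaf_hom_closed[OF X X \<Phi>' \<Phi>'] \<phi>\<phi>
        sladj_presheaf_unit[OF \<Phi>]] by blast
qed

lemma symcomplete_symcompletion: "symcomplete Q SC"
  unfolding symcomplete_def representable_def
proof (intro conjI ballI allI impI symcat_symcompletion)
  fix X \<Phi> assume X: "X \<in> obs" and "sladj Q (ucat Q X) SC \<Phi>"
  then have \<Phi>: "sladj_presheaf SC X \<Phi>"
    using sladj_iff_sladj_presheaf[OF symcat_symcompletion] by blast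
  have rep: "(X, restrict_yoneda \<Phi>) \<in> c_ob SC"
    using symcompletion_ob_iff[OF symmetric] X sladj_presheaf_restrict_yoneda[OF X \<Phi>]
    by (simp add: restrict_yoneda_def)
  show "\<exists>r\<in>c_ob SC. c_ty SC r = X \<and> (\<forall>p\<in>c_ob SC. \<Phi> p () = c_hom SC p r)"
  proof (intro bexI conjI ballI)
    show "c_ty SC (X, restrict_yoneda \<Phi>) = X" by (simp add: symcompletion_ty)
    fix p assume p: "p \<in> c_ob SC"
    then show "\<Phi> p () = c_hom SC p (X, restrict_yoneda \<Phi>)"
      using presheaf_eq_presheaf_hom_restrict_yoneda[OF X sladj_presheaf_presheaf[OF \<Phi>]]
        symcompletion_hom[OF symmetric] by (cases p) simp
  qed (rule rep)
qed

subsection \<open>Uniqueness of extensions\<close>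

lemma le_hom_if_le_hom_yoneda:
  assumes B: "symcat Q B" and G: "qfunctor Q SC B G" and G': "qfunctor Q SC B G'"
    and le: "\<And>x. x \<in> c_ob A \<Longrightarrow>
      one (c_ty B (G (yoneda Q A x))) \<sqsubseteq> c_hom B (G (yoneda Q A x)) (G' (yoneda Q A x))"
    and p: "p \<in> c_ob SC"
  shows "one (c_ty B (G p)) \<sqsubseteq> c_hom B (G p) (G' p)"
proof -
  note qB = symcat_qcat[OF B]
  obtain X \<phi> where x: "p = (X, \<phi>)" "X \<in> obs" "sladj_presheaf A X \<phi>"
    using p by (rule symcompletion_obE)
  note \<phi>' = sladj_presheaf_presheaf[OF x(3)]
  have Gp: "G p \<in> c_ob B" "c_ty B (G p) = X" and G'p: "G' p \<in> c_ob B" "c_ty B (G' p) = X"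
    using qfunctor_ob[OF G p] qfunctor_ty[OF G p] qfunctor_ob[OF G' p] qfunctor_ty[OF G' p] x(1)
    by (simp_all add: symcompletion_ty)
  have GpG'p: "c_hom B (G p) (G' p) \<in> hom X X" using qcat_hom_closed[OF qB G'p(1) Gp(1)] Gp G'p by simp
  have "presheaf_hom A X \<phi> X \<phi> \<sqsubseteq> c_hom B (G p) (G' p)"
  proof (rule presheaf_hom_least[OF x(2) x(2) \<phi>' \<phi>' GpG'p])
    fix a assume a: "a \<in> c_ob A"
    let ?Y = "yoneda Q A a"
    have Y: "?Y \<in> c_ob SC" using yoneda_in_symcompletion[OF a] .
    have GY: "G ?Y \<in> c_ob B" "c_ty B (G ?Y) = c_ty A a" and G'Y: "G' ?Y \<in> c_ob B" "c_ty B (G' ?Y) = c_ty A a"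
      using qfunctor_ob[OF G Y] qfunctor_ty[OF G Y] qfunctor_ob[OF G' Y] qfunctor_ty[OF G' Y]
      by (simp_all add: symcompletion_ty_yoneda)
    have \<phi>a: "\<phi> a () \<in> hom X (c_ty A a)" using presheaf_closed[OF \<phi>' a] .
    have "(\<phi> a ())\<^sup>o \<sqsubseteq> c_hom B (G p) (G ?Y)"
      using qfunctor_le[OF G Y p] symcompletion_hom_yoneda_right[OF p a] x(1) by simp
    then have 1: "(\<phi> a ())\<^sup>o \<sqsubseteq> c_hom B (G p) (G' ?Y)"
      using qcat_le_hom_via_iso[OF qB Gp(1) GY(1) G'Y(1) _ _ _ le[OF a]] inv_closed[OF \<phi>a] Gp GY G'Y
      by simp
    have 2: "\<phi> a () \<sqsubseteq> c_hom B (G' ?Y) (G' p)"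
      using qfunctor_le[OF G' p Y] symcompletion_hom_yoneda_left[OF p a] x(1) by simp
    have "(\<phi> a ())\<^sup>o \<cdot> \<phi> a () \<sqsubseteq> c_hom B (G p) (G' ?Y) \<cdot> c_hom B (G' ?Y) (G' p)"
      using comp_mono[OF \<phi>a _ inv_closed[OF \<phi>a] _ 2 1] qcat_hom_closed[OF qB G'p(1) G'Y(1)]
        qcat_hom_closed[OF qB G'Y(1) Gp(1)] Gp G'p G'Y by simp
    then show "(\<phi> a ())\<^sup>o \<cdot> \<phi> a () \<sqsubseteq> c_hom B (G p) (G' p)"
      using le_trans[OF comp_closed[OF \<phi>a inv_closed[OF \<phi>a]] _ GpG'p _
          qcat_comp_le[OF qB G'p(1) G'Y(1) Gp(1)]]
        comp_closed[OF qcat_hom_closed[OF qB G'p(1) G'Y(1)] qcat_hom_closed[OF qB G'Y(1) Gp(1)]]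
        Gp G'p G'Y by simp
  qed
  then show ?thesis
    using le_trans[OF id_closed[OF x(2)] presheaf_hom_closed[OF x(2) x(2) \<phi>' \<phi>'] GpG'p
        sladj_presheaf_unit[OF x(3)]] Gp by simp
qed

end

locale sym_qcat_functor = sym_qcat Q A for Q :: "('o,'m) quantaloid" and A :: "('a,'o,'m) qcat" +
  fixes B :: "('b,'o,'m) qcat" and F :: "'a \<Rightarrow> 'b"
  assumes symmetric_target: "symcat Q B" and F_functor: "qfunctor Q A B F"
begin

lemma qcat_target: "qcat Q B"
  using symcat_qcat[OF symmetric_target] .

lemma hom_to_image_closed: "b \<in> c_ob B \<Longrightarrow> a \<in> c_ob A \<Longrightarrow> c_hom B b (F a) \<in> hom (c_ty A a) (c_ty B b)"
  using qcat_hom_closed[OF qcat_target qfunctor_ob[OF F_functor]] qfunctor_ty[OF F_functor] by metis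

lemma hom_from_image_closed:
  "b \<in> c_ob B \<Longrightarrow> a \<in> c_ob A \<Longrightarrow> c_hom B (F a) b \<in> hom (c_ty B b) (c_ty A a)"
  using qcat_hom_closed[OF qcat_target _ qfunctor_ob[OF F_functor]] qfunctor_ty[OF F_functor] by metis

definition pushforward :: "'o \<Rightarrow> ('a \<Rightarrow> unit \<Rightarrow> 'm) \<Rightarrow> 'b \<Rightarrow> unit \<Rightarrow> 'm" where
  "pushforward X \<phi> b _ = lub X (c_ty B b) ((\<lambda>a. c_hom B b (F a) \<cdot> \<phi> a ()) ` c_ob A)"

lemma pushforward_terms_closed:
  assumes "presheaf A X \<phi>" "b \<in> c_ob B"
  shows "(\<lambda>a. c_hom B b (F a) \<cdot> \<phi> a ()) ` c_ob A \<subseteq> hom X (c_ty B b)"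
  by (rule image_subsetI, rule comp_closed[OF presheaf_closed[OF assms(1)] hom_to_image_closed[OF assms(2)]])

lemma pushforward_closed:
  "X \<in> obs \<Longrightarrow> presheaf A X \<phi> \<Longrightarrow> b \<in> c_ob B \<Longrightarrow> pushforward X \<phi> b () \<in> hom X (c_ty B b)"
  unfolding pushforward_def
  using lub_closed[OF _ qcat_ty_obs[OF qcat_target] pushforward_terms_closed] .

lemma pushforward_upper:
  "X \<in> obs \<Longrightarrow> presheaf A X \<phi> \<Longrightarrow> b \<in> c_ob B \<Longrightarrow> a \<in> c_ob A \<Longrightarrow>
    c_hom B b (F a) \<cdot> \<phi> a () \<sqsubseteq> pushforward X \<phi> b ()"
  unfolding pushforward_def
  using lub_upper[OF _ qcat_ty_obs[OF qcat_target] pushforward_terms_closed] by blast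

lemma le_pushforward:
  assumes X: "X \<in> obs" and \<phi>: "presheaf A X \<phi>" and a: "a \<in> c_ob A"
  shows "\<phi> a () \<sqsubseteq> pushforward X \<phi> (F a) ()"
proof -
  have Fa: "F a \<in> c_ob B" and ty: "c_ty B (F a) = c_ty A a"
    using qfunctor_ob[OF F_functor a] qfunctor_ty[OF F_functor a] .
  have \<phi>a: "\<phi> a () \<in> hom X (c_ty A a)" using presheaf_closed[OF \<phi> a] .
  have h: "c_hom B (F a) (F a) \<in> hom (c_ty A a) (c_ty A a)"
    using hom_to_image_closed[OF Fa a] ty by simp
  have "one (c_ty A a) \<cdot> \<phi> a () \<sqsubseteq> c_hom B (F a) (F a) \<cdot> \<phi> a ()"
    using comp_mono_left[OF \<phi>a id_closed[OF qcat_ty_obs[OF qcat a]] h]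
      qcat_id_le[OF qcat_target Fa] ty by simp
  then show ?thesis
    using le_trans[OF \<phi>a comp_closed[OF \<phi>a h] _ _ pushforward_upper[OF X \<phi> Fa a]]
      pushforward_closed[OF X \<phi> Fa] ty \<phi>a by simp
qed

lemma presheaf_pushforward:
  assumes X: "X \<in> obs" and \<phi>: "presheaf A X \<phi>"
  shows "presheaf B X (pushforward X \<phi>)"
  unfolding presheaf_def
proof (intro conjI ballI)
  fix b assume "b \<in> c_ob B"
  then show "pushforward X \<phi> b () \<in> hom X (c_ty B b)" by (rule pushforward_closed[OF X \<phi>])
next
  fix b b' assume b': "b' \<in> c_ob B" and b: "b \<in> c_ob B"
  have bb: "c_hom B b' b \<in> hom (c_ty B b) (c_ty B b')" using qcat_hom_closed[OF qcat_target b b'] .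
  show "c_hom B b' b \<cdot> pushforward X \<phi> b () \<sqsubseteq> pushforward X \<phi> b' ()"
    unfolding pushforward_def[of X \<phi> b]
  proof (rule comp_lub_le[OF X qcat_ty_obs[OF qcat_target b] pushforward_terms_closed[OF \<phi> b] bb
        pushforward_closed[OF X \<phi> b']])
    fix t assume "t \<in> (\<lambda>a. c_hom B b (F a) \<cdot> \<phi> a ()) ` c_ob A"
    then obtain a where a: "a \<in> c_ob A" "t = c_hom B b (F a) \<cdot> \<phi> a ()" by blast
    have \<phi>a: "\<phi> a () \<in> hom X (c_ty A a)" using presheaf_closed[OF \<phi> a(1)] .
    have bFa: "c_hom B b (F a) \<in> hom (c_ty A a) (c_ty B b)" using hom_to_image_closed[OF b a(1)] .
    have b'Fa: "c_hom B b' (F a) \<in> hom (c_ty A a) (c_ty B b')" using hom_to_image_closed[OF b' a(1)] .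
    have "c_hom B b' b \<cdot> c_hom B b (F a) \<cdot> \<phi> a () \<sqsubseteq> c_hom B b' (F a) \<cdot> \<phi> a ()"
      using comp_mono_left[OF \<phi>a comp_closed[OF bFa bb] b'Fa
          qcat_comp_le[OF qcat_target qfunctor_ob[OF F_functor a(1)] b b']] .
    then show "c_hom B b' b \<cdot> t \<sqsubseteq> pushforward X \<phi> b' ()"
      using le_trans[OF comp_closed[OF \<phi>a comp_closed[OF bFa bb]] comp_closed[OF \<phi>a b'Fa]
          pushforward_closed[OF X \<phi> b'] _ pushforward_upper[OF X \<phi> b' a(1)]]
        a(2) comp_assoc[OF \<phi>a bFa bb] by simp
  qed
qed

lemma pushforward_unit:
  assumes X: "X \<in> obs" and \<phi>: "sladj_presheaf A X \<phi>"
  shows "one X \<sqsubseteq> presheaf_hom B X (pushforward X \<phi>) X (pushforward X \<phi>)"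
proof -
  note \<phi>' = sladj_presheaf_presheaf[OF \<phi>]
  note \<psi> = presheaf_pushforward[OF X \<phi>']
  let ?\<psi> = "pushforward X \<phi>"
  have \<psi>\<psi>: "presheaf_hom B X ?\<psi> X ?\<psi> \<in> hom X X" using presheaf_hom_closed[OF X X \<psi> \<psi>] .
  have "presheaf_hom A X \<phi> X \<phi> \<sqsubseteq> presheaf_hom B X ?\<psi> X ?\<psi>"
  proof (rule presheaf_hom_least[OF X X \<phi>' \<phi>' \<psi>\<psi>])
    fix a assume a: "a \<in> c_ob A"
    have Fa: "F a \<in> c_ob B" using qfunctor_ob[OF F_functor a] .
    have \<phi>a: "\<phi> a () \<in> hom X (c_ty A a)" using presheaf_closed[OF \<phi>' a] .
    have \<psi>Fa: "?\<psi> (F a) () \<in> hom X (c_ty A a)"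
      using pushforward_closed[OF X \<phi>' Fa] qfunctor_ty[OF F_functor a] by simp
    have le: "\<phi> a () \<sqsubseteq> ?\<psi> (F a) ()" using le_pushforward[OF X \<phi>' a] .
    have "(\<phi> a ())\<^sup>o \<cdot> \<phi> a () \<sqsubseteq> (?\<psi> (F a) ())\<^sup>o \<cdot> ?\<psi> (F a) ()"
      using comp_mono[OF \<phi>a \<psi>Fa inv_closed[OF \<phi>a] inv_closed[OF \<psi>Fa] le inv_mono[OF \<phi>a \<psi>Fa le]] .
    then show "(\<phi> a ())\<^sup>o \<cdot> \<phi> a () \<sqsubseteq> presheaf_hom B X ?\<psi> X ?\<psi>"
      using le_trans[OF comp_closed[OF \<phi>a inv_closed[OF \<phi>a]] comp_closed[OF \<psi>Fa inv_closed[OF \<psi>Fa]] \<psi>\<psi>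
          _ presheaf_hom_upper[OF X X \<psi> \<psi> Fa]] by blast
  qed
  then show ?thesis
    using le_trans[OF id_closed[OF X] presheaf_hom_closed[OF X X \<phi>' \<phi>'] \<psi>\<psi>
        sladj_presheaf_unit[OF \<phi>]] by blast
qed

lemma pushforward_counit:
  assumes X: "X \<in> obs" and \<phi>: "sladj_presheaf A X \<phi>" and b: "b \<in> c_ob B" "b' \<in> c_ob B"
  shows "pushforward X \<phi> b' () \<cdot> (pushforward X \<phi> b ())\<^sup>o \<sqsubseteq> c_hom B b' b"
proof -
  note \<phi>' = sladj_presheaf_presheaf[OF \<phi>]
  let ?S = "\<lambda>b. (\<lambda>a. c_hom B b (F a) \<cdot> \<phi> a ()) ` c_ob A"
  have T: "c_ty B b \<in> obs" "c_ty B b' \<in> obs" using qcat_ty_obs[OF qcat_target] b by blast+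
  have bb: "c_hom B b' b \<in> hom (c_ty B b) (c_ty B b')" using qcat_hom_closed[OF qcat_target b] .
  have inv_terms: "qinv ` ?S b \<subseteq> hom (c_ty B b) X"
    using pushforward_terms_closed[OF \<phi>' b(1)] inv_closed by blast
  have "pushforward X \<phi> b' () \<cdot> (pushforward X \<phi> b ())\<^sup>o =
      lub X (c_ty B b') (?S b') \<cdot> lub (c_ty B b) X (qinv ` ?S b)"
    unfolding pushforward_def inv_lub[OF X T(1) pushforward_terms_closed[OF \<phi>' b(1)]] ..
  also have "\<dots> \<sqsubseteq> c_hom B b' b"
  proof (rule lub_comp_lub_le[OF T(1) X T(2) pushforward_terms_closed[OF \<phi>' b(2)] inv_terms bb])
    fix u t assume "u \<in> ?S b'" "t \<in> qinv ` ?S b"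
    then obtain a c where a: "a \<in> c_ob A" "u = c_hom B b' (F a) \<cdot> \<phi> a ()"
      and c: "c \<in> c_ob A" "t = (c_hom B b (F c) \<cdot> \<phi> c ())\<^sup>o" by blast
    have Fa: "F a \<in> c_ob B" and Fc: "F c \<in> c_ob B" using qfunctor_ob[OF F_functor] a c by blast+
    have \<phi>a: "\<phi> a () \<in> hom X (c_ty A a)" and \<phi>c: "\<phi> c () \<in> hom X (c_ty A c)"
      using presheaf_closed[OF \<phi>'] a c by blast+
    have k: "c_hom B b' (F a) \<in> hom (c_ty A a) (c_ty B b')" using hom_to_image_closed[OF b(2) a(1)] .
    have m: "c_hom B (F c) b \<in> hom (c_ty B b) (c_ty A c)" using hom_from_image_closed[OF b(1) c(1)] .
    have ac: "c_hom A a c \<in> hom (c_ty A c) (c_ty A a)" using qcat_hom_closed[OF qcat c(1) a(1)] .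
    have FaFc: "c_hom B (F a) (F c) \<in> hom (c_ty A c) (c_ty A a)"
      using hom_to_image_closed[OF Fa c(1)] qfunctor_ty[OF F_functor a(1)] by simp
    have b'Fc: "c_hom B b' (F c) \<in> hom (c_ty A c) (c_ty B b')" using hom_to_image_closed[OF b(2) c(1)] .
    have t: "t = (\<phi> c ())\<^sup>o \<cdot> c_hom B (F c) b"
      using c(2) inv_comp[OF \<phi>c hom_to_image_closed[OF b(1) c(1)]]
        symcat_hom_swap[OF symmetric_target Fc b(1)] by simp
    have 1: "u \<cdot> t \<sqsubseteq> c_hom B b' (F a) \<cdot> c_hom A a c \<cdot> c_hom B (F c) b"
      unfolding a(2) t
      by (rule comp_le_middle[OF m inv_closed[OF \<phi>c] \<phi>a k ac sladj_presheaf_counit[OF \<phi> c(1) a(1)]])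
    have "c_hom B b' (F a) \<cdot> c_hom A a c \<sqsubseteq> c_hom B b' (F a) \<cdot> c_hom B (F a) (F c)"
      using comp_mono_right[OF k ac FaFc qfunctor_le[OF F_functor c(1) a(1)]] .
    then have "c_hom B b' (F a) \<cdot> c_hom A a c \<sqsubseteq> c_hom B b' (F c)"
      using le_trans[OF comp_closed[OF ac k] comp_closed[OF FaFc k] b'Fc]
        qcat_comp_le[OF qcat_target Fc Fa b(2)] by blast
    then have 2: "c_hom B b' (F a) \<cdot> c_hom A a c \<cdot> c_hom B (F c) b \<sqsubseteq> c_hom B b' (F c) \<cdot> c_hom B (F c) b"
      using comp_mono_left[OF m comp_closed[OF ac k] b'Fc] by blast
    have 3: "c_hom B b' (F c) \<cdot> c_hom B (F c) b \<sqsubseteq> c_hom B b' b"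
      using qcat_comp_le[OF qcat_target b(1) Fc b(2)] .
    have "u \<cdot> t \<in> hom (c_ty B b) (c_ty B b')"
      unfolding a(2) t using comp_closed[OF comp_closed[OF m inv_closed[OF \<phi>c]] comp_closed[OF \<phi>a k]] .
    then show "u \<cdot> t \<sqsubseteq> c_hom B b' b"
      using le_trans3[OF _ comp_closed[OF m comp_closed[OF ac k]] comp_closed[OF m b'Fc] bb 1 2 3] by blast
  qed
  finally show ?thesis .
qed

lemma sladj_presheaf_pushforward:
  "X \<in> obs \<Longrightarrow> sladj_presheaf A X \<phi> \<Longrightarrow> sladj_presheaf B X (pushforward X \<phi>)"
  unfolding sladj_presheaf_def[of B]
  using presheaf_pushforward[OF _ sladj_presheaf_presheaf] pushforward_unit pushforward_counit by blast

subsection \<open>Extension along the Yoneda embedding\<close>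

definition extension :: "'o \<times> ('a \<Rightarrow> unit \<Rightarrow> 'm) \<Rightarrow> 'b" where
  "extension p = representative B (fst p) (pushforward (fst p) (snd p))"

context
  assumes complete: "symcomplete Q B"
begin

lemma extension:
  assumes p: "(X, \<phi>) \<in> c_ob SC"
  shows "extension (X, \<phi>) \<in> c_ob B" "c_ty B (extension (X, \<phi>)) = X"
    "\<And>b. b \<in> c_ob B \<Longrightarrow> c_hom B b (extension (X, \<phi>)) = pushforward X \<phi> b ()"
proof -
  have X: "X \<in> obs" and \<phi>: "sladj_presheaf A X \<phi>"
    using p symcompletion_ob_iff[OF symmetric] by blast+
  note rep = representative[OF complete X sladj_presheaf_pushforward[OF X \<phi>]]
  show "extension (X, \<phi>) \<in> c_ob B" "c_ty B (extension (X, \<phi>)) = X"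
    "\<And>b. b \<in> c_ob B \<Longrightarrow> c_hom B b (extension (X, \<phi>)) = pushforward X \<phi> b ()"
    unfolding extension_def using rep by simp_all
qed

lemma qfunctor_extension: "qfunctor Q SC B extension"
  unfolding qfunctor_def
proof (intro conjI ballI)
  fix p assume "p \<in> c_ob SC"
  then show "extension p \<in> c_ob B" "c_ty B (extension p) = c_ty SC p"
    using extension by (cases p, simp add: symcompletion_ty)+
next
  fix p q assume p: "p \<in> c_ob SC" and q: "q \<in> c_ob SC"
  obtain X \<phi> where x: "p = (X, \<phi>)" "X \<in> obs" "sladj_presheaf A X \<phi>"
    using p by (rule symcompletion_obE)
  obtain Y \<psi> where y: "q = (Y, \<psi>)" "Y \<in> obs" "sladj_presheaf A Y \<psi>"
    using q by (rule symcompletion_obE)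
  note \<phi>' = sladj_presheaf_presheaf[OF x(3)] and \<psi>' = sladj_presheaf_presheaf[OF y(3)]
  have Gq: "extension q \<in> c_ob B" "c_ty B (extension q) = Y" using extension q y(1) by simp_all
  have GqGp: "c_hom B (extension q) (extension p) = pushforward X \<phi> (extension q) ()"
    using extension(3)[OF p[unfolded x(1)] Gq(1)] x(1) by simp
  have Gp_closed: "pushforward X \<phi> (extension q) () \<in> hom X Y"
    using pushforward_closed[OF x(2) \<phi>' Gq(1)] Gq(2) by simp
  have "presheaf_hom A Y \<psi> X \<phi> \<sqsubseteq> pushforward X \<phi> (extension q) ()"
  proof (rule presheaf_hom_least[OF x(2) y(2) \<psi>' \<phi>' Gp_closed])
    fix a assume a: "a \<in> c_ob A"
    have Fa: "F a \<in> c_ob B" using qfunctor_ob[OF F_functor a] .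
    have \<phi>a: "\<phi> a () \<in> hom X (c_ty A a)" using presheaf_closed[OF \<phi>' a] .
    have \<psi>a: "\<psi> a () \<in> hom Y (c_ty A a)" using presheaf_closed[OF \<psi>' a] .
    have GqFa: "c_hom B (extension q) (F a) \<in> hom (c_ty A a) Y"
      using hom_to_image_closed[OF Gq(1) a] Gq(2) by simp
    have "(\<psi> a ())\<^sup>o \<sqsubseteq> (pushforward Y \<psi> (F a) ())\<^sup>o"
      using inv_mono[OF \<psi>a _ le_pushforward[OF y(2) \<psi>' a]] pushforward_closed[OF y(2) \<psi>' Fa]
        qfunctor_ty[OF F_functor a] by simp
    also have "(pushforward Y \<psi> (F a) ())\<^sup>o = c_hom B (extension q) (F a)"
      using extension(3)[OF q[unfolded y(1)] Fa] symcat_hom_swap[OF symmetric_target Gq(1) Fa] y(1)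
      by simp
    finally have "(\<psi> a ())\<^sup>o \<cdot> \<phi> a () \<sqsubseteq> c_hom B (extension q) (F a) \<cdot> \<phi> a ()"
      using comp_mono_left[OF \<phi>a inv_closed[OF \<psi>a] GqFa] by blast
    then show "(\<psi> a ())\<^sup>o \<cdot> \<phi> a () \<sqsubseteq> pushforward X \<phi> (extension q) ()"
      using le_trans[OF comp_closed[OF \<phi>a inv_closed[OF \<psi>a]] comp_closed[OF \<phi>a GqFa] Gp_closed
          _ pushforward_upper[OF x(2) \<phi>' Gq(1) a]] by blast
  qed
  then show "c_hom SC q p \<sqsubseteq> c_hom B (extension q) (extension p)"
    using symcompletion_hom[OF symmetric] q GqGp x(1) y(1) by simp
qed

lemma iso_extension_yoneda:
  assumes x: "x \<in> c_ob A"
  shows "iso_obj Q B (extension (yoneda Q A x)) (F x)"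
proof -
  have Y: "(c_ty A x, yoneda_presheaf x) \<in> c_ob SC"
    using yoneda_in_symcompletion[OF x] by (simp add: yoneda_eq)
  note G = extension[OF Y]
  have Fx: "F x \<in> c_ob B" and ty: "c_ty B (F x) = c_ty A x"
    using qfunctor_ob[OF F_functor x] qfunctor_ty[OF F_functor x] .
  have "one (c_ty A x) \<sqsubseteq> c_hom A x x" using qcat_id_le[OF qcat x] .
  moreover have "c_hom A x x \<sqsubseteq> c_hom B (F x) (extension (yoneda Q A x))"
    using le_pushforward[OF qcat_ty_obs[OF qcat x] sladj_presheaf_presheaf[OF sladj_presheaf_yoneda[OF x]] x]
      G(3)[OF Fx] x by (simp add: yoneda_eq)
  ultimately have "one (c_ty B (F x)) \<sqsubseteq> c_hom B (F x) (extension (yoneda Q A x))"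
    using le_trans[OF id_closed[OF qcat_ty_obs[OF qcat x]] qcat_hom_closed[OF qcat x x]]
      hom_from_image_closed[OF G(1) x] G(2) ty by (simp add: yoneda_eq)
  then show ?thesis
    using iso_obj_sym[OF iso_objI[OF symmetric_target Fx G(1)]] G(2) ty by (simp add: yoneda_eq)
qed

end

end

theorem proposition3p3:
  fixes Q :: "('o,'m) quantaloid" and A :: "('a,'o,'m) qcat"
  assumes "involutive_quantaloid Q" and "symcat Q A"
  shows "symcomplete Q (symcompletion Q A) \<and>
         qfunctor Q A (symcompletion Q A) (yoneda Q A) \<and>
         (\<forall>(B :: ('b,'o,'m) qcat) F. symcomplete Q B \<and> qfunctor Q A B F \<longrightarrow>
            (\<exists>G. qfunctor Q (symcompletion Q A) B G \<and>
                 (\<forall>x\<in>c_ob A. iso_obj Q B (G (yoneda Q A x)) (F x)))) \<and>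
         (\<forall>(B :: ('b,'o,'m) qcat) G G'. symcomplete Q B \<and>
            qfunctor Q (symcompletion Q A) B G \<and> qfunctor Q (symcompletion Q A) B G' \<and>
            (\<forall>x\<in>c_ob A. iso_obj Q B (G (yoneda Q A x)) (G' (yoneda Q A x))) \<longrightarrow>
            (\<forall>p\<in>c_ob (symcompletion Q A). iso_obj Q B (G p) (G' p)))"
proof -
  interpret sym_qcat Q A
    using assms by unfold_locales
  show ?thesis
  proof (intro conjI allI impI ballI)
    show "symcomplete Q SC" by (rule symcomplete_symcompletion)
    show "qfunctor Q A SC (yoneda Q A)" by (rule qfunctor_yoneda)
  next
    fix B :: "('b,'o,'m) qcat" and F
    assume B: "symcomplete Q B \<and> qfunctor Q A B F"
    then interpret sym_qcat_functor Q A B F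
      by unfold_locales (simp_all add: symcomplete_def)
    show "\<exists>G. qfunctor Q SC B G \<and> (\<forall>x\<in>c_ob A. iso_obj Q B (G (yoneda Q A x)) (F x))"
      using qfunctor_extension iso_extension_yoneda B by blast
  next
    fix B :: "('b,'o,'m) qcat" and G G' p
    assume "symcomplete Q B \<and> qfunctor Q SC B G \<and> qfunctor Q SC B G' \<and>
      (\<forall>x\<in>c_ob A. iso_obj Q B (G (yoneda Q A x)) (G' (yoneda Q A x)))"
    then have B: "symcat Q B" and G: "qfunctor Q SC B G" "qfunctor Q SC B G'"
      and iso: "\<And>x. x \<in> c_ob A \<Longrightarrow>
        one (c_ty B (G (yoneda Q A x))) \<sqsubseteq> c_hom B (G (yoneda Q A x)) (G' (yoneda Q A x))"
      unfolding symcomplete_def iso_obj_def by blast+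
    assume p: "p \<in> c_ob SC"
    have "one (c_ty B (G p)) \<sqsubseteq> c_hom B (G p) (G' p)"
      using le_hom_if_le_hom_yoneda[OF B G iso p] .
    then show "iso_obj Q B (G p) (G' p)"
      using iso_objI[OF B qfunctor_ob[OF G(1) p] qfunctor_ob[OF G(2) p]]
        qfunctor_ty[OF G(1) p] qfunctor_ty[OF G(2) p] by simp
  qed
qed

end
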